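(* Let $\delta\in(0,1)$. For any $\delta$-PAC algorithm and any bandit model $\boldsymbol{\mu}=(\mu_1,\dots,\mu_K)$ (with means in the exponential family's mean space) having a unique best arm, and any cost means $\boldsymbol{c}$, \[ \mathbb{E}_{\boldsymbol{\mu}\times\boldsymbol{c}}\left[J(\tau_\delta)\right]\ \ge\ T^*(\boldsymbol{\mu})\log\frac{1}{\delta}+o\!\left(\log\frac{1}{\delta}\right), \] where $T^*(\boldsymbol{\mu})$ is defined by \[ T^*(\boldsymbol{\mu})^{-1}=\sup_{\boldsymbol{w}\in\Sigma_K}\ \inf_{\boldsymbol{\lambda}:\,a^*(\boldsymbol{\lambda})\neq a^*(\boldsymbol{\mu})}\ \sum_{a=1}^K\frac{w_a}{c_a}\,d(\mu_a,\lambda_a). \]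
   Context: Cost-aware best arm identification. There are $K$ arms $\mathcal{A}=\{1,\dots,K\}$. The reward distribution of arm $a$ is $\nu_{\mu_a}$, a member of a one-parameter natural exponential family $\mathcal{P}=\{\nu_\mu:\ \nu_\mu(dx)=h(x)\exp(\theta_\mu x-b(\theta_\mu)),\ \mu\in[0,1]\}$ parametrized by its mean $\mu$, with $b$ convex and twice differentiable and finite moment generating function; $d(\mu,\mu')$ denotes the KL divergence from $\nu_\mu$ to $\nu_{\mu'}$. The cost distribution of arm $a$ is $\nu_{c_a}$ with mean $c_a$, supported in $[\ell,1]$ for a constant $\ell>0$. The best arm $a^*(\boldsymbol{\mu})=\arg\max_a\mu_a$ is assumed unique. At each round $t\ge1$ an algorithm chooses $A_t\in\mathcal{A}$ based on past observations and observes a reward $R_t\sim\nu_{\mu_{A_t}}$ and a cost $C_t\sim\nu_{c_{A_t}}$, drawn independently (and independently of the past). $N_a(t)$ is the number of pulls of arm $a$ up to time $t$, and $J(t)=\sum_{k=1}^tC_k$ is the cumulative cost. An algorithm consists of a sampling rule, a stopping time $\tau_\delta$ and a decision $\hat a$; it is $\delta$-PAC if for every reward/cost instance $(\boldsymbol{\mu},\boldsymbol{c})$, $\mathbb{P}_{\boldsymbol{\mu}\times\boldsymbol{c}}(\hat a\neq a^*(\boldsymbol{\mu}))\le\delta$ and $\mathbb{P}_{\boldsymbol{\mu}\times\boldsymbol{c}}(\tau_\delta<\infty)=1$. $\Sigma_K=\{\boldsymbol{w}\in\mathbb{R}_+^K:\sum_a w_a=1\}$. In the infimum, $\boldsymbol{\lambda}$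 ranges over bandit models in the same family with a unique best arm different from $a^*(\boldsymbol{\mu})$. *)

theory Defs
  imports "HOL-Probability.Probability"
begin

definition is_best :: "('k \<Rightarrow> real) \<Rightarrow> 'k \<Rightarrow> bool" where
  "is_best mu a \<longleftrightarrow> (\<forall>b. b \<noteq> a \<longrightarrow> mu b < mu a)"

definition unique_best :: "('k \<Rightarrow> real) \<Rightarrow> bool" where
  "unique_best mu \<longleftrightarrow> (\<exists>a. is_best mu a)"

definition best_arm :: "('k \<Rightarrow> real) \<Rightarrow> 'k" where
  "best_arm mu = (THE a. is_best mu a)"

definition Alt :: "('k \<Rightarrow> real) \<Rightarrow> ('k \<Rightarrow> real) set" where
  "Alt mu = {lam. (\<forall>a. lam a \<in> {0..1}) \<and> unique_best lam \<and> best_arm lam \<noteq> best_arm mu}"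

definition prob_simplex :: "('k::finite \<Rightarrow> real) set" where
  "prob_simplex = {w. (\<forall>a. 0 \<le> w a) \<and> (\<Sum>a\<in>UNIV. w a) = 1}"

definition expfam_nu :: "real measure \<Rightarrow> (real \<Rightarrow> real) \<Rightarrow> (real \<Rightarrow> real) \<Rightarrow> real \<Rightarrow> real measure" where
  "expfam_nu H theta b m = density H (\<lambda>x. ennreal (exp (theta m * x - b (theta m))))"

definition exp_family :: "real measure \<Rightarrow> (real \<Rightarrow> real) \<Rightarrow> (real \<Rightarrow> real) \<Rightarrow> real set \<Rightarrow> bool" where
  "exp_family H theta b Theta \<longleftrightarrow>
     sets H = sets borel \<and> open Theta \<and> convex Theta \<and> theta ` {0..1} \<subseteq> Theta \<and>
     convex_on Theta b \<and>
     (\<exists>b'. \<forall>x\<in>Theta. (b has_real_derivative b' x) (at x) \<and> b' differentiable (at x)) \<and>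
     (\<forall>m\<in>{0..1}. prob_space (expfam_nu H theta b m) \<and>
        integrable (expfam_nu H theta b m) (\<lambda>x. x) \<and>
        (\<integral>x. x \<partial>expfam_nu H theta b m) = m \<and>
        (\<forall>s. integrable (expfam_nu H theta b m) (\<lambda>x. exp (s * x))))"

text \<open>KL divergence d(m,m') from nu_m to nu_m' (natural logarithm):
  KL_divergence b M N is the integral over N of log (dN/dM).\<close>
definition kl :: "(real \<Rightarrow> real measure) \<Rightarrow> real \<Rightarrow> real \<Rightarrow> real" where
  "kl nu m m' = KL_divergence (exp 1) (nu m') (nu m)"

definition cost_family :: "(real \<Rightarrow> real measure) \<Rightarrow> real \<Rightarrow> bool" where
  "cost_family nuc l \<longleftrightarrow> 0 < l \<and> l \<le> 1 \<and>
     (\<forall>c\<in>{l..1}. prob_space (nuc c) \<and> sets (nuc c) = sets borel \<and>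
        (AE x in nuc c. x \<in> {l..1}) \<and> integrable (nuc c) (\<lambda>x. x) \<and> (\<integral>x. x \<partial>nuc c) = c)"

type_synonym 'k obs = "'k \<times> real \<times> real"  (* (arm, reward, cost) *)

text \<open>An algorithm: given internal randomisation u and the observation sequence
  (observation s = the s-th observation, s = 0,1,...), at time t (t observations so far)
  it chooses the next arm, decides whether to stop, and recommends an arm.\<close>
record 'k alg =
  samp :: "nat \<Rightarrow> real \<Rightarrow> (nat \<Rightarrow> 'k obs) \<Rightarrow> 'k"
  stp  :: "nat \<Rightarrow> real \<Rightarrow> (nat \<Rightarrow> 'k obs) \<Rightarrow> bool"
  dec  :: "nat \<Rightarrow> real \<Rightarrow> (nat \<Rightarrow> 'k obs) \<Rightarrow> 'k"

definition obsM :: "(nat \<Rightarrow> 'k obs) measure" where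
  "obsM = PiM UNIV (\<lambda>_. count_space UNIV \<Otimes>\<^sub>M (borel \<Otimes>\<^sub>M borel))"

definition valid_alg :: "'k alg \<Rightarrow> bool" where
  "valid_alg A \<longleftrightarrow>
     (\<forall>t. (\<lambda>(u, h). samp A t u h) \<in> borel \<Otimes>\<^sub>M obsM \<rightarrow>\<^sub>M count_space UNIV \<and>
          (\<lambda>(u, h). stp A t u h) \<in> borel \<Otimes>\<^sub>M obsM \<rightarrow>\<^sub>M count_space UNIV \<and>
          (\<lambda>(u, h). dec A t u h) \<in> borel \<Otimes>\<^sub>M obsM \<rightarrow>\<^sub>M count_space UNIV) \<and>
     (\<forall>t u h h'. (\<forall>s<t. h s = h' s) \<longrightarrow>
          samp A t u h = samp A t u h' \<and> stp A t u h = stp A t u h' \<and> dec A t u h = dec A t u h')"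

definition list_fun :: "'a list \<Rightarrow> nat \<Rightarrow> 'a" where
  "list_fun xs = (\<lambda>s. if s < length xs then xs ! s else undefined)"

text \<open>Interaction with the environment. Z (a, n) = (reward, cost) of the (n+1)-th pull of arm a.\<close>
primrec hist :: "'k alg \<Rightarrow> ('k \<times> nat \<Rightarrow> real \<times> real) \<Rightarrow> real \<Rightarrow> nat \<Rightarrow> 'k obs list" where
  "hist A Z u 0 = []"
| "hist A Z u (Suc t) =
     (let h = hist A Z u t; a = samp A t u (list_fun h)
      in h @ [(a, Z (a, length (filter (\<lambda>ob. fst ob = a) h)))])"

definition obsf :: "'k alg \<Rightarrow> ('k \<times> nat \<Rightarrow> real \<times> real) \<Rightarrow> real \<Rightarrow> nat \<Rightarrow> 'k obs" where
  "obsf A Z u s = last (hist A Z u (Suc s))"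

definition stops :: "'k alg \<Rightarrow> ('k \<times> nat \<Rightarrow> real \<times> real) \<Rightarrow> real \<Rightarrow> bool" where
  "stops A Z u \<longleftrightarrow> (\<exists>t. stp A t u (obsf A Z u))"

definition tau :: "'k alg \<Rightarrow> ('k \<times> nat \<Rightarrow> real \<times> real) \<Rightarrow> real \<Rightarrow> nat" where
  "tau A Z u = (LEAST t. stp A t u (obsf A Z u))"

definition decision :: "'k alg \<Rightarrow> ('k \<times> nat \<Rightarrow> real \<times> real) \<Rightarrow> real \<Rightarrow> 'k" where
  "decision A Z u = dec A (tau A Z u) u (obsf A Z u)"

definition Jcost :: "'k alg \<Rightarrow> ('k \<times> nat \<Rightarrow> real \<times> real) \<Rightarrow> real \<Rightarrow> ennreal" where
  "Jcost A Z u = (if stops A Z u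
     then (\<Sum>s<tau A Z u. ennreal (snd (snd (obsf A Z u s)))) else \<infinity>)"

definition inst_measure :: "(real \<Rightarrow> real measure) \<Rightarrow> (real \<Rightarrow> real measure) \<Rightarrow>
    ('k \<Rightarrow> real) \<Rightarrow> ('k \<Rightarrow> real) \<Rightarrow> (('k \<times> nat \<Rightarrow> real \<times> real) \<times> real) measure" where
  "inst_measure nu nuc mu c =
     PiM UNIV (\<lambda>p. nu (mu (fst p)) \<Otimes>\<^sub>M nuc (c (fst p))) \<Otimes>\<^sub>M uniform_measure lborel {0..1}"

definition is_PAC :: "(real \<Rightarrow> real measure) \<Rightarrow> (real \<Rightarrow> real measure) \<Rightarrow> real \<Rightarrow> real \<Rightarrow> 'k alg \<Rightarrow> bool" where
  "is_PAC nu nuc l delta A \<longleftrightarrow>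
     (\<forall>mu c. (\<forall>a. mu a \<in> {0..1}) \<longrightarrow> (\<forall>a. c a \<in> {l..1}) \<longrightarrow> unique_best mu \<longrightarrow>
        measure (inst_measure nu nuc mu c)
          {\<omega> \<in> space (inst_measure nu nuc mu c).
             stops A (fst \<omega>) (snd \<omega>) \<and> decision A (fst \<omega>) (snd \<omega>) \<noteq> best_arm mu} \<le> delta \<and>
        (AE \<omega> in inst_measure nu nuc mu c. stops A (fst \<omega>) (snd \<omega>)))"

definition expected_cost :: "(real \<Rightarrow> real measure) \<Rightarrow> (real \<Rightarrow> real measure) \<Rightarrow>
    ('k \<Rightarrow> real) \<Rightarrow> ('k \<Rightarrow> real) \<Rightarrow> 'k alg \<Rightarrow> ereal" where
  "expected_cost nu nuc mu c A =
     enn2ereal (\<integral>\<^sup>+ \<omega>. Jcost A (fst \<omega>) (snd \<omega>) \<partial>inst_measure nu nuc mu c)"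

definition Tstar :: "(real \<Rightarrow> real measure) \<Rightarrow> ('k::finite \<Rightarrow> real) \<Rightarrow> ('k \<Rightarrow> real) \<Rightarrow> ereal" where
  "Tstar nu mu c = 1 / (SUP w\<in>prob_simplex. INF lam\<in>Alt mu.
       ereal (\<Sum>a\<in>UNIV. w a / c a * kl nu (mu a) (lam a)))"

end

(*
  Change of measure combined with Wald's identity.  Fix an alternative lambda whose best arm differs
  from that of mu.  The likelihood ratio L of the history up to the stopping time (lambda against mu)
  is a product of one density factor per sample; integrating out one table entry at a time shows that
  E_mu [L; E] = P_lambda (E) for every event E decided at the stopping time.  For E = "the best arm of
  mu is returned" this is at most delta, since E is an error under lambda.  Applying ln y <= y - 1 to
  k L with k = P_mu (E) / delta and taking expectations, Wald's identity turns the expected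
  log-likelihood ratio into sum_a E[N_a] d(mu_a, lambda_a), which is therefore at least
  (1 - delta) ln (1/delta) - 2.  Wald's identity for the costs gives E[J] = sum_a c_a E[N_a], so the
  weights w_a proportional to c_a E[N_a] show E[J] >= T*(mu) ((1 - delta) ln (1/delta) - 2); dividing by
  ln (1/delta) and letting delta -> 0 gives the claim.
*)
theory Submission
  imports Defs "HOL-Real_Asymp.Real_Asymp"
begin

section \<open>Histories\<close>

definition pulls :: "'k alg \<Rightarrow> ('k \<times> nat \<Rightarrow> real \<times> real) \<Rightarrow> real \<Rightarrow> nat \<Rightarrow> 'k \<Rightarrow> nat" where
  "pulls A Z u t a = length (filter (\<lambda>ob. fst ob = a) (hist A Z u t))"

definition arm_at :: "'k alg \<Rightarrow> ('k \<times> nat \<Rightarrow> real \<times> real) \<Rightarrow> real \<Rightarrow> nat \<Rightarrow> 'k" where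
  "arm_at A Z u t = samp A t u (list_fun (hist A Z u t))"

definition running :: "'k alg \<Rightarrow> nat \<Rightarrow> ('k \<times> nat \<Rightarrow> real \<times> real) \<Rightarrow> real \<Rightarrow> bool" where
  "running A s Z u \<longleftrightarrow> (\<forall>s'\<le>s. \<not> stp A s' u (list_fun (hist A Z u s)))"

lemma hist_Suc_eq:
  "hist A Z u (Suc t) = hist A Z u t @ [(arm_at A Z u t, Z (arm_at A Z u t, pulls A Z u t (arm_at A Z u t)))]"
  by (simp add: Let_def pulls_def arm_at_def)

declare hist.simps(2)[simp del]

lemma length_hist [simp]: "length (hist A Z u t) = t"
  by (induction t) (simp_all add: hist_Suc_eq)

lemma obsf_eq: "obsf A Z u s = (arm_at A Z u s, Z (arm_at A Z u s, pulls A Z u s (arm_at A Z u s)))"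
  unfolding obsf_def by (simp add: hist_Suc_eq)

lemma nth_hist: "s < t \<Longrightarrow> hist A Z u t ! s = obsf A Z u s"
proof (induction t)
  case (Suc t)
  show ?case
  proof (cases "s < t")
    case True
    then show ?thesis using Suc by (simp add: hist_Suc_eq nth_append)
  next
    case False
    then have "s = t" using Suc by simp
    then show ?thesis by (simp add: hist_Suc_eq nth_append obsf_eq)
  qed
qed simp

lemma list_fun_hist: "s < t \<Longrightarrow> list_fun (hist A Z u t) s = obsf A Z u s"
  by (simp add: list_fun_def nth_hist)

lemma list_fun_snoc:
  "list_fun (xs @ [y]) = (\<lambda>s. if s < length xs then list_fun xs s else if s = length xs then y else undefined)"
  by (auto simp: list_fun_def nth_append fun_eq_iff)

lemma pulls_le: "pulls A Z u t a \<le> t"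
  unfolding pulls_def by (metis length_filter_le length_hist)

lemma pulls_Suc: "pulls A Z u (Suc t) a = pulls A Z u t a + (if arm_at A Z u t = a then 1 else 0)"
  by (simp add: pulls_def hist_Suc_eq)

lemma valid_alg_obsf_hist:
  assumes "valid_alg A" and "s \<le> t"
  shows "stp A s u (obsf A Z u) = stp A s u (list_fun (hist A Z u t))"
    and "dec A s u (obsf A Z u) = dec A s u (list_fun (hist A Z u t))"
proof -
  have "\<forall>s'<s. obsf A Z u s' = list_fun (hist A Z u t) s'"
    using assms(2) by (auto simp: list_fun_hist)
  then show "stp A s u (obsf A Z u) = stp A s u (list_fun (hist A Z u t))"
    and "dec A s u (obsf A Z u) = dec A s u (list_fun (hist A Z u t))"
    using assms(1) unfolding valid_alg_def by blast+
qed

lemma stopped_at_iff: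
  assumes "valid_alg A"
  shows "(stp A t u (list_fun (hist A Z u t)) \<and> (\<forall>s<t. \<not> stp A s u (list_fun (hist A Z u t))))
    \<longleftrightarrow> stops A Z u \<and> tau A Z u = t"
proof -
  have "(stp A t u (list_fun (hist A Z u t)) \<and> (\<forall>s<t. \<not> stp A s u (list_fun (hist A Z u t))))
      \<longleftrightarrow> stp A t u (obsf A Z u) \<and> (\<forall>s<t. \<not> stp A s u (obsf A Z u))"
    using valid_alg_obsf_hist(1)[OF assms] by (metis less_imp_le order_refl)
  also have "\<dots> \<longleftrightarrow> stops A Z u \<and> tau A Z u = t"
    unfolding stops_def tau_def
  proof safe
    assume "stp A t u (obsf A Z u)" "\<forall>s<t. \<not> stp A s u (obsf A Z u)"
    then show "(LEAST t. stp A t u (obsf A Z u)) = t"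
      by (intro Least_equality) (auto simp: not_less[symmetric])
  next
    fix t' assume "stp A t' u (obsf A Z u)"
    then show "stp A (LEAST t. stp A t u (obsf A Z u)) u (obsf A Z u)" by (rule LeastI)
  next
    fix t' s assume "stp A t' u (obsf A Z u)" "s < (LEAST t. stp A t u (obsf A Z u))" "stp A s u (obsf A Z u)"
    then show False using not_less_Least by blast
  qed blast
  finally show ?thesis .
qed

lemma running_iff_less_tau:
  assumes "valid_alg A" and "stops A Z u"
  shows "running A s Z u \<longleftrightarrow> s < tau A Z u"
proof -
  have "running A s Z u \<longleftrightarrow> (\<forall>s'\<le>s. \<not> stp A s' u (obsf A Z u))"
    unfolding running_def using valid_alg_obsf_hist(1)[OF assms(1)] by auto
  also have "\<dots> \<longleftrightarrow> s < tau A Z u"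
  proof -
    obtain t0 where "stp A t0 u (obsf A Z u)"
      using assms(2) unfolding stops_def by blast
    then have "stp A (tau A Z u) u (obsf A Z u)"
      unfolding tau_def by (rule LeastI)
    moreover have "s' < tau A Z u \<Longrightarrow> \<not> stp A s' u (obsf A Z u)" for s'
      unfolding tau_def by (rule not_less_Least)
    ultimately show ?thesis
      by (meson le_less_trans not_less)
  qed
  finally show ?thesis .
qed

lemma hist_fun_upd_unread:
  "pulls A Z u t a \<le> n \<Longrightarrow> hist A (Z((a,n):=x)) u t = hist A Z u t"
proof (induction t)
  case (Suc t)
  have IH: "hist A (Z((a,n):=x)) u t = hist A Z u t"
    using Suc.IH Suc.prems pulls_Suc[of A Z u t a] by linarith
  have arm: "arm_at A (Z((a,n):=x)) u t = arm_at A Z u t"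
    and pulls: "pulls A (Z((a,n):=x)) u t b = pulls A Z u t b" for b
    by (simp_all add: arm_at_def pulls_def IH)
  have "(arm_at A Z u t, pulls A Z u t (arm_at A Z u t)) \<noteq> (a, n)"
    using Suc.prems pulls_Suc[of A Z u t a] by auto
  then have entry: "(Z((a,n):=x)) (arm_at A Z u t, pulls A Z u t (arm_at A Z u t))
      = Z (arm_at A Z u t, pulls A Z u t (arm_at A Z u t))"
    by (rule fun_upd_other)
  show ?case
    unfolding hist_Suc_eq IH arm pulls entry ..
qed simp

lemma if_pulls_eq_fun_upd:
  fixes F :: "('k \<times> real \<times> real) list \<Rightarrow> 'b::zero"
  shows "(if pulls A (Z((a,n):=x)) u s a = n then F (hist A (Z((a,n):=x)) u s) else 0) =
         (if pulls A Z u s a = n then F (hist A Z u s) else 0)"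
proof (cases "pulls A Z u s a = n")
  case True
  then have "hist A (Z((a,n):=x)) u s = hist A Z u s" by (intro hist_fun_upd_unread) simp
  then show ?thesis by (simp add: pulls_def)
next
  case False
  have "pulls A (Z((a,n):=x)) u s a \<noteq> n"
  proof
    assume n: "pulls A (Z((a,n):=x)) u s a = n"
    then have "hist A ((Z((a,n):=x))((a,n) := Z (a,n))) u s = hist A (Z((a,n):=x)) u s"
      by (intro hist_fun_upd_unread) simp
    then show False using n False by (simp add: pulls_def)
  qed
  then show ?thesis using False by simp
qed

section \<open>Measurability\<close>

definition obs_space :: "('k \<times> real \<times> real) measure" where
  "obs_space = count_space UNIV \<Otimes>\<^sub>M (borel \<Otimes>\<^sub>M borel)"

definition table_space :: "('k \<times> nat \<Rightarrow> real \<times> real) measure" where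
  "table_space = PiM UNIV (\<lambda>_. borel \<Otimes>\<^sub>M borel)"

definition outcome_space :: "(('k \<times> nat \<Rightarrow> real \<times> real) \<times> real) measure" where
  "outcome_space = table_space \<Otimes>\<^sub>M borel"

lemma obsM_eq: "obsM = PiM UNIV (\<lambda>_. obs_space)"
  unfolding obsM_def obs_space_def ..

lemma space_obs_space [simp]: "space obs_space = UNIV"
  by (simp add: obs_space_def space_pair_measure)

lemma measurable_comp_hist:
  assumes "(\<lambda>(u, h). f u h) \<in> borel \<Otimes>\<^sub>M obsM \<rightarrow>\<^sub>M N"
    and "(\<lambda>\<omega>. list_fun (hist A (fst \<omega>) (snd \<omega>) t)) \<in> outcome_space \<rightarrow>\<^sub>M obsM"
  shows "(\<lambda>\<omega>. f (snd \<omega>) (list_fun (hist A (fst \<omega>) (snd \<omega>) t))) \<in> outcome_space \<rightarrow>\<^sub>M N"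
proof -
  have "(\<lambda>\<omega>. (snd \<omega>, list_fun (hist A (fst \<omega>) (snd \<omega>) t))) \<in> outcome_space \<rightarrow>\<^sub>M borel \<Otimes>\<^sub>M obsM"
    by (rule measurable_Pair[OF _ assms(2)]) (simp add: outcome_space_def)
  from measurable_compose[OF this assms(1)] show ?thesis by simp
qed

lemma measurable_hist_pulls:
  fixes A :: "'k::finite alg"
  assumes "valid_alg A"
  shows "(\<lambda>\<omega>. list_fun (hist A (fst \<omega>) (snd \<omega>) t)) \<in> outcome_space \<rightarrow>\<^sub>M obsM \<and>
         (\<forall>b. (\<lambda>\<omega>. pulls A (fst \<omega>) (snd \<omega>) t b) \<in> outcome_space \<rightarrow>\<^sub>M count_space UNIV)"
proof (induction t)
  case 0
  have "(\<lambda>\<omega>. list_fun ([] :: 'k obs list)) \<in> outcome_space \<rightarrow>\<^sub>M obsM"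
    by (rule measurable_const) (simp add: obsM_eq space_PiM)
  then show ?case by (simp add: pulls_def)
next
  case (Suc t)
  note hist = Suc.IH[THEN conjunct1] and pulls = Suc.IH[THEN conjunct2, rule_format]
  define arm where "arm \<omega> = arm_at A (fst \<omega>) (snd \<omega>) t" for \<omega>
  define entry where "entry \<omega> = (arm \<omega>, pulls A (fst \<omega>) (snd \<omega>) t (arm \<omega>))" for \<omega>
  have arm: "arm \<in> outcome_space \<rightarrow>\<^sub>M count_space UNIV"
    unfolding arm_def arm_at_def
    by (rule measurable_comp_hist[OF _ hist]) (use assms in \<open>simp add: valid_alg_def\<close>)
  have entry: "entry \<in> outcome_space \<rightarrow>\<^sub>M count_space UNIV"
    unfolding entry_def
    by (rule measurable_compose_countable[where f="\<lambda>b \<omega>. (b, pulls A (fst \<omega>) (snd \<omega>) t b)", OF _ arm])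
      (rule measurable_compose[OF pulls], simp)
  have "(\<lambda>\<omega>. fst \<omega> p) \<in> outcome_space \<rightarrow>\<^sub>M borel \<Otimes>\<^sub>M borel" for p
    unfolding outcome_space_def table_space_def by measurable
  then have "(\<lambda>\<omega>. fst \<omega> (entry \<omega>)) \<in> outcome_space \<rightarrow>\<^sub>M borel \<Otimes>\<^sub>M borel"
    by (rule measurable_compose_countable[where f="\<lambda>p \<omega>. fst \<omega> p", OF _ entry])
  then have new: "(\<lambda>\<omega>. (arm \<omega>, fst \<omega> (entry \<omega>))) \<in> outcome_space \<rightarrow>\<^sub>M obs_space"
    unfolding obs_space_def by (rule measurable_Pair[OF arm])
  have old: "(\<lambda>\<omega>. list_fun (hist A (fst \<omega>) (snd \<omega>) t) s) \<in> outcome_space \<rightarrow>\<^sub>M obs_space" for s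
    by (rule measurable_compose[OF hist]) (simp add: obsM_eq)
  have "(\<lambda>\<omega>. list_fun (hist A (fst \<omega>) (snd \<omega>) (Suc t))) = (\<lambda>\<omega> s.
      if s < t then list_fun (hist A (fst \<omega>) (snd \<omega>) t) s
      else if s = t then (arm \<omega>, fst \<omega> (entry \<omega>)) else undefined)"
    by (intro ext) (simp add: hist_Suc_eq list_fun_snoc arm_def entry_def)
  then have "(\<lambda>\<omega>. list_fun (hist A (fst \<omega>) (snd \<omega>) (Suc t))) \<in> outcome_space \<rightarrow>\<^sub>M obsM"
    unfolding obsM_eq
    by (simp only:) (rule measurable_PiM_single', auto intro!: measurable_If old new simp: space_PiM)
  moreover have "(\<lambda>\<omega>. pulls A (fst \<omega>) (snd \<omega>) (Suc t) b) \<in> outcome_space \<rightarrow>\<^sub>M count_space UNIV" for b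
  proof -
    have "(\<lambda>\<omega>. pulls A (fst \<omega>) (snd \<omega>) t b + (if arm \<omega> = b then 1 else 0)) \<in> outcome_space \<rightarrow>\<^sub>M count_space UNIV"
      by (rule measurable_compose_countable[where f="\<lambda>n \<omega>. n + (if arm \<omega> = b then 1 else 0)", OF _ pulls])
        (rule measurable_compose[OF arm], simp)
    then show ?thesis by (simp add: pulls_Suc arm_def)
  qed
  ultimately show ?case by blast
qed

locale bandit_algorithm =
  fixes A :: "'k::finite alg"
  assumes valid: "valid_alg A"
begin

lemma measurable_hist [measurable]:
  "(\<lambda>\<omega>. list_fun (hist A (fst \<omega>) (snd \<omega>) t)) \<in> outcome_space \<rightarrow>\<^sub>M obsM"
  using measurable_hist_pulls[OF valid] by blast

lemma measurable_pulls [measurable]: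
  "(\<lambda>\<omega>. pulls A (fst \<omega>) (snd \<omega>) t b) \<in> outcome_space \<rightarrow>\<^sub>M count_space UNIV"
  using measurable_hist_pulls[OF valid] by blast

lemma measurable_arm [measurable]:
  "(\<lambda>\<omega>. arm_at A (fst \<omega>) (snd \<omega>) t) \<in> outcome_space \<rightarrow>\<^sub>M count_space UNIV"
  unfolding arm_at_def
  by (rule measurable_comp_hist[OF _ measurable_hist]) (use valid in \<open>simp add: valid_alg_def\<close>)

lemma measurable_stp [measurable]:
  "Measurable.pred outcome_space (\<lambda>\<omega>. stp A s (snd \<omega>) (list_fun (hist A (fst \<omega>) (snd \<omega>) t)))"
  by (rule measurable_comp_hist[OF _ measurable_hist]) (use valid in \<open>simp add: valid_alg_def\<close>)

lemma measurable_dec [measurable]: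
  "(\<lambda>\<omega>. dec A s (snd \<omega>) (list_fun (hist A (fst \<omega>) (snd \<omega>) t))) \<in> outcome_space \<rightarrow>\<^sub>M count_space UNIV"
  by (rule measurable_comp_hist[OF _ measurable_hist]) (use valid in \<open>simp add: valid_alg_def\<close>)

lemma measurable_obsf [measurable]:
  "(\<lambda>\<omega>. obsf A (fst \<omega>) (snd \<omega>) s) \<in> outcome_space \<rightarrow>\<^sub>M obs_space"
proof -
  have "(\<lambda>\<omega>. list_fun (hist A (fst \<omega>) (snd \<omega>) (Suc s)) s) \<in> outcome_space \<rightarrow>\<^sub>M obs_space"
    by (rule measurable_compose[OF measurable_hist]) (simp add: obsM_eq)
  then show ?thesis by (simp add: list_fun_hist)
qed

lemma measurable_obsf_sample [measurable]:
  "(\<lambda>\<omega>. snd (obsf A (fst \<omega>) (snd \<omega>) s)) \<in> outcome_space \<rightarrow>\<^sub>M borel \<Otimes>\<^sub>M borel"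
proof -
  have "snd \<in> obs_space \<rightarrow>\<^sub>M (borel \<Otimes>\<^sub>M borel :: (real \<times> real) measure)"
    unfolding obs_space_def by measurable
  then show ?thesis using measurable_compose[OF measurable_obsf] by blast
qed

lemma stp_obsf: "stp A t u (obsf A Z u) = stp A t u (list_fun (hist A Z u t))"
  by (rule valid_alg_obsf_hist(1)[OF valid order_refl])

lemma dec_obsf: "dec A t u (obsf A Z u) = dec A t u (list_fun (hist A Z u t))"
  by (rule valid_alg_obsf_hist(2)[OF valid order_refl])

lemma measurable_stops [measurable]:
  "Measurable.pred outcome_space (\<lambda>\<omega>. stops A (fst \<omega>) (snd \<omega>))"
  unfolding stops_def stp_obsf by measurable

lemma measurable_tau [measurable]:
  "(\<lambda>\<omega>. tau A (fst \<omega>) (snd \<omega>)) \<in> outcome_space \<rightarrow>\<^sub>M count_space UNIV"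
  unfolding tau_def stp_obsf by (rule measurable_Least) measurable

lemma measurable_decision [measurable]:
  "(\<lambda>\<omega>. decision A (fst \<omega>) (snd \<omega>)) \<in> outcome_space \<rightarrow>\<^sub>M count_space UNIV"
proof -
  have "(\<lambda>\<omega>. (\<lambda>t \<omega>. dec A t (snd \<omega>) (list_fun (hist A (fst \<omega>) (snd \<omega>) t))) (tau A (fst \<omega>) (snd \<omega>)) \<omega>)
      \<in> outcome_space \<rightarrow>\<^sub>M count_space UNIV"
    by (rule measurable_compose_countable[OF _ measurable_tau]) measurable
  then show ?thesis by (simp add: decision_def dec_obsf)
qed

lemma measurable_running [measurable]:
  "Measurable.pred outcome_space (\<lambda>\<omega>. running A s (fst \<omega>) (snd \<omega>))"
  unfolding running_def by measurable

end

section \<open>Wald's identity\<close>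

lemma nn_integral_PiM_split_coordinate:
  fixes M :: "'i \<Rightarrow> 'a measure"
  assumes M: "\<And>j. prob_space (M j)" and f: "f \<in> borel_measurable (PiM UNIV M)"
  shows "(\<integral>\<^sup>+Z. f Z \<partial>PiM UNIV M) = (\<integral>\<^sup>+X. (\<integral>\<^sup>+x. f (X(i:=x)) \<partial>M i) \<partial>PiM (UNIV - {i}) M)"
proof -
  have U: "insert i (UNIV - {i}) = UNIV" by auto
  have distr: "distr (M i \<Otimes>\<^sub>M PiM (UNIV-{i}) M) (PiM UNIV M) (\<lambda>(x,X). X(i:=x)) = PiM UNIV M"
    using distr_pair_PiM_eq_PiM[of "UNIV - {i}" M i] M unfolding U by auto
  have upd: "(\<lambda>(x,X). X(i:=x)) \<in> M i \<Otimes>\<^sub>M PiM (UNIV-{i}) M \<rightarrow>\<^sub>M PiM UNIV M"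
  proof -
    have "(\<lambda>p. (snd p)(i := fst p)) \<in> M i \<Otimes>\<^sub>M PiM (UNIV-{i}) M \<rightarrow>\<^sub>M PiM UNIV M"
      by (rule measurable_fun_upd[where J="UNIV - {i}"]) auto
    then show ?thesis by (simp add: case_prod_beta')
  qed
  have "pair_sigma_finite (M i) (PiM (UNIV-{i}) M)"
    using M by (intro pair_sigma_finite.intro prob_space_imp_sigma_finite prob_space_PiM) auto
  moreover have "(\<lambda>p. f ((\<lambda>(x,X). X(i:=x)) p)) \<in> borel_measurable (M i \<Otimes>\<^sub>M PiM (UNIV-{i}) M)"
    by (rule measurable_compose[OF upd f])
  ultimately have "(\<integral>\<^sup>+p. f ((\<lambda>(x,X). X(i:=x)) p) \<partial>(M i \<Otimes>\<^sub>M PiM (UNIV-{i}) M))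
      = (\<integral>\<^sup>+X. (\<integral>\<^sup>+x. f (X(i:=x)) \<partial>M i) \<partial>PiM (UNIV - {i}) M)"
    using pair_sigma_finite.nn_integral_snd by fastforce
  then show ?thesis
    using nn_integral_distr[OF upd, of f] f distr by simp
qed

lemma nn_integral_PiM_resample:
  fixes M :: "'i \<Rightarrow> 'a measure"
  assumes M: "\<And>j. prob_space (M j)" and f: "f \<in> borel_measurable (PiM UNIV M)"
  shows "(\<integral>\<^sup>+Z. f Z \<partial>PiM UNIV M) = (\<integral>\<^sup>+Z. (\<integral>\<^sup>+x. f (Z(i:=x)) \<partial>M i) \<partial>PiM UNIV M)"
proof -
  have upd: "(\<lambda>p. (fst p)(i := snd p)) \<in> PiM UNIV M \<Otimes>\<^sub>M M i \<rightarrow>\<^sub>M PiM UNIV M"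
    by (rule measurable_fun_upd[where J=UNIV]) auto
  have "sigma_finite_measure (M i)" using M by (simp add: prob_space_imp_sigma_finite)
  then have g: "(\<lambda>Z. \<integral>\<^sup>+x. f (Z(i:=x)) \<partial>M i) \<in> borel_measurable (PiM UNIV M)"
    using sigma_finite_measure.borel_measurable_nn_integral_fst[OF _ measurable_compose[OF upd f]]
    by simp
  have "(\<integral>\<^sup>+Z. (\<integral>\<^sup>+x. f (Z(i:=x)) \<partial>M i) \<partial>PiM UNIV M)
      = (\<integral>\<^sup>+X. (\<integral>\<^sup>+y. (\<integral>\<^sup>+x. f (X(i:=x)) \<partial>M i) \<partial>M i) \<partial>PiM (UNIV - {i}) M)"
    using nn_integral_PiM_split_coordinate[OF M g, of i] by simp
  also have "\<dots> = (\<integral>\<^sup>+X. (\<integral>\<^sup>+x. f (X(i:=x)) \<partial>M i) \<partial>PiM (UNIV - {i}) M)"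
    using prob_space.emeasure_space_1[OF M[of i]] by (simp add: nn_integral_const)
  also have "\<dots> = (\<integral>\<^sup>+Z. f Z \<partial>PiM UNIV M)"
    by (rule nn_integral_PiM_split_coordinate[OF M f, symmetric])
  finally show ?thesis by simp
qed

locale bandit_env = bandit_algorithm A for A :: "'k::finite alg" +
  fixes M :: "'k \<Rightarrow> (real \<times> real) measure" and U :: "real measure"
  assumes prob_space_M: "\<And>a. prob_space (M a)"
    and sets_M: "\<And>a. sets (M a) = sets (borel \<Otimes>\<^sub>M borel)"
    and prob_space_U: "prob_space U"
    and sets_U: "sets U = sets borel"
begin

abbreviation "tables \<equiv> PiM UNIV (\<lambda>p::'k \<times> nat. M (fst p))"

abbreviation "outcomes \<equiv> tables \<Otimes>\<^sub>M U"

lemma prob_space_tables: "prob_space tables"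
  using prob_space_M by (auto intro: prob_space_PiM)

lemma prob_space_outcomes: "prob_space outcomes"
  using prob_space_tables prob_space_U by (rule prob_space_pair)

lemma sets_tables: "sets tables = sets table_space"
  unfolding table_space_def by (rule sets_PiM_cong) (auto simp: sets_M)

lemma sets_outcomes: "sets outcomes = sets outcome_space"
  unfolding outcome_space_def by (rule sets_pair_measure_cong[OF sets_tables sets_U])

lemma measurable_outcomes: "f \<in> outcome_space \<rightarrow>\<^sub>M N \<Longrightarrow> f \<in> outcomes \<rightarrow>\<^sub>M N"
  using measurable_cong_sets[OF sets_outcomes refl] by blast

lemma measurable_section: "f \<in> outcome_space \<rightarrow>\<^sub>M N \<Longrightarrow> (\<lambda>Z. f (Z, u)) \<in> tables \<rightarrow>\<^sub>M N"
proof -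
  have "(\<lambda>Z. (Z, u)) \<in> table_space \<rightarrow>\<^sub>M outcome_space"
    unfolding outcome_space_def by measurable
  then have "(\<lambda>Z. (Z, u)) \<in> tables \<rightarrow>\<^sub>M outcome_space"
    using measurable_cong_sets[OF sets_tables refl] by blast
  then show "f \<in> outcome_space \<rightarrow>\<^sub>M N \<Longrightarrow> (\<lambda>Z. f (Z, u)) \<in> tables \<rightarrow>\<^sub>M N"
    using measurable_compose by blast
qed

lemmas measurable_pulls_section [measurable] = measurable_section[OF measurable_pulls, simplified]
lemmas measurable_arm_section [measurable] = measurable_section[OF measurable_arm, simplified]
lemmas measurable_stp_section [measurable] = measurable_section[OF measurable_stp, simplified]
lemmas measurable_dec_section [measurable] = measurable_section[OF measurable_dec, simplified]
lemmas measurable_running_section [measurable] = measurable_section[OF measurable_running, simplified]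

lemma measurable_entry [measurable]: "(\<lambda>Z. Z p) \<in> tables \<rightarrow>\<^sub>M borel \<Otimes>\<^sub>M borel"
proof -
  have "(\<lambda>Z. Z p) \<in> tables \<rightarrow>\<^sub>M M (fst p)" by simp
  then show ?thesis using measurable_cong_sets[OF refl sets_M] by blast
qed

lemma pair_sigma_finite_outcomes: "pair_sigma_finite tables U"
  using prob_space_tables prob_space_U
  by (intro pair_sigma_finite.intro prob_space_imp_sigma_finite)

lemma nn_integral_outcomes:
  "f \<in> borel_measurable outcome_space \<Longrightarrow> (\<integral>\<^sup>+\<omega>. f \<omega> \<partial>outcomes) = (\<integral>\<^sup>+u. (\<integral>\<^sup>+Z. f (Z,u) \<partial>tables) \<partial>U)"
  using pair_sigma_finite.nn_integral_snd[OF pair_sigma_finite_outcomes measurable_outcomes] by simp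

lemma measurable_nn_integral_section:
  assumes "f \<in> borel_measurable outcome_space"
  shows "(\<lambda>u. \<integral>\<^sup>+Z. f (Z,u) \<partial>tables) \<in> borel_measurable U"
proof -
  have "(\<lambda>(u,Z). f (Z,u)) \<in> borel_measurable (U \<Otimes>\<^sub>M tables)"
    using measurable_outcomes[OF assms] measurable_pair_swap_iff by blast
  from sigma_finite_measure.borel_measurable_nn_integral_fst[OF
      prob_space_imp_sigma_finite[OF prob_space_tables] this]
  show ?thesis by simp
qed

lemma measurable_nn_integral_entry:
  assumes "g \<in> borel_measurable tables"
  shows "(\<lambda>Z. \<integral>\<^sup>+x. g (Z(p := x)) \<partial>M (fst p)) \<in> borel_measurable tables"
proof -
  have "(\<lambda>q. (fst q)(p := snd q)) \<in> tables \<Otimes>\<^sub>M M (fst p) \<rightarrow>\<^sub>M tables"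
    by (rule measurable_fun_upd[where J=UNIV]) auto
  from sigma_finite_measure.borel_measurable_nn_integral_fst[OF
      prob_space_imp_sigma_finite[OF prob_space_M] measurable_compose[OF this assms]]
  show ?thesis by simp
qed

text \<open>The \<open>(s+1)\<close>-th sample is the entry \<open>(a, n)\<close> of the table exactly when \<open>a\<close> is pulled at
  time \<open>s\<close> after \<open>n\<close> earlier pulls of \<open>a\<close>; on that event the history up to time \<open>s\<close> does not
  depend on this entry, so the entry can be integrated out first.\<close>
lemma nn_integral_read_entry:
  assumes phi: "phi \<in> borel_measurable (borel \<Otimes>\<^sub>M borel)"
  shows "(\<integral>\<^sup>+Z. (if pulls A Z u s a = n \<and> running A s Z u \<and> arm_at A Z u s = a then phi (Z (a,n)) else 0) \<partial>tables)
    = (\<integral>\<^sup>+x. phi x \<partial>M a) * (\<integral>\<^sup>+Z. (if pulls A Z u s a = n \<and> running A s Z u \<and> arm_at A Z u s = a then 1 else 0) \<partial>tables)"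
proof -
  define G where "G Z = (if pulls A Z u s a = n \<and> running A s Z u \<and> arm_at A Z u s = a then phi (Z (a,n)) else 0)" for Z
  define I where "I Z = (if pulls A Z u s a = n \<and> running A s Z u \<and> arm_at A Z u s = a then 1 else (0::ennreal))" for Z
  have [measurable]: "G \<in> borel_measurable tables" "I \<in> borel_measurable tables"
    unfolding G_def I_def using phi by measurable
  have G_upd: "G (Z((a,n):=x)) = I Z * phi x" for Z x
  proof -
    have "G (Z((a,n):=x)) = (if pulls A (Z((a,n):=x)) u s a = n then
        (\<lambda>h. if (\<forall>s'\<le>s. \<not> stp A s' u (list_fun h)) \<and> samp A s u (list_fun h) = a then phi x else 0)
          (hist A (Z((a,n):=x)) u s) else 0)"
      unfolding G_def running_def arm_at_def by auto
    also have "\<dots> = (if pulls A Z u s a = n then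
        (\<lambda>h. if (\<forall>s'\<le>s. \<not> stp A s' u (list_fun h)) \<and> samp A s u (list_fun h) = a then phi x else 0)
          (hist A Z u s) else 0)"
      by (rule if_pulls_eq_fun_upd)
    also have "\<dots> = I Z * phi x"
      unfolding I_def running_def arm_at_def by auto
    finally show ?thesis .
  qed
  have "phi \<in> borel_measurable (M a)"
    using measurable_cong_sets[OF sets_M refl] phi by blast
  then have "(\<integral>\<^sup>+Z. (\<integral>\<^sup>+x. G (Z((a,n):=x)) \<partial>M a) \<partial>tables) = (\<integral>\<^sup>+Z. I Z * (\<integral>\<^sup>+x. phi x \<partial>M a) \<partial>tables)"
    by (simp add: G_upd nn_integral_cmult)
  then show ?thesis
    using nn_integral_PiM_resample[of "\<lambda>p. M (fst p)" G "(a,n)"] prob_space_M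
    unfolding G_def[symmetric] I_def[symmetric] by (simp add: nn_integral_multc mult.commute)
qed

lemma wald_identity_step:
  assumes phi [measurable]: "\<And>a. phi a \<in> borel_measurable (borel \<Otimes>\<^sub>M borel)"
  shows "(\<integral>\<^sup>+Z. (if running A s Z u then phi (arm_at A Z u s) (snd (obsf A Z u s)) else 0) \<partial>tables)
       = (\<Sum>a\<in>UNIV. (\<integral>\<^sup>+x. phi a x \<partial>M a) * (\<integral>\<^sup>+Z. (if running A s Z u \<and> arm_at A Z u s = a then 1 else 0) \<partial>tables))"
proof -
  have sum_pulls: "(\<Sum>n\<in>{..s}. if pulls A Z u s a = n \<and> running A s Z u \<and> arm_at A Z u s = a then f n else 0)
      = (if running A s Z u \<and> arm_at A Z u s = a then f (pulls A Z u s a) else 0)" for Z a and f :: "nat \<Rightarrow> ennreal"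
    using pulls_le[of A Z u s a] by (cases "running A s Z u \<and> arm_at A Z u s = a") auto
  have "(\<lambda>Z. if running A s Z u then phi (arm_at A Z u s) (snd (obsf A Z u s)) else 0)
      = (\<lambda>Z. \<Sum>a\<in>UNIV. \<Sum>n\<in>{..s}. if pulls A Z u s a = n \<and> running A s Z u \<and> arm_at A Z u s = a
          then phi a (Z (a,n)) else 0)"
    by (intro ext) (simp add: sum_pulls sum.delta obsf_eq)
  then have "(\<integral>\<^sup>+Z. (if running A s Z u then phi (arm_at A Z u s) (snd (obsf A Z u s)) else 0) \<partial>tables)
      = (\<Sum>a\<in>UNIV. \<Sum>n\<in>{..s}. (\<integral>\<^sup>+x. phi a x \<partial>M a) * (\<integral>\<^sup>+Z. (if pulls A Z u s a = n \<and> running A s Z u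
          \<and> arm_at A Z u s = a then 1 else 0) \<partial>tables))"
    by (simp add: nn_integral_sum nn_integral_read_entry)
  also have "\<dots> = (\<Sum>a\<in>UNIV. (\<integral>\<^sup>+x. phi a x \<partial>M a) * (\<integral>\<^sup>+Z. (if running A s Z u \<and> arm_at A Z u s = a then 1 else 0) \<partial>tables))"
    by (simp add: sum_distrib_left[symmetric] nn_integral_sum[symmetric] sum_pulls)
  finally show ?thesis .
qed

end

lemma (in bandit_algorithm) measurable_running_sample:
  assumes [measurable]: "\<And>a. phi a \<in> borel_measurable (borel \<Otimes>\<^sub>M borel)"
  shows "(\<lambda>\<omega>. if running A s (fst \<omega>) (snd \<omega>)
      then phi (arm_at A (fst \<omega>) (snd \<omega>) s) (snd (obsf A (fst \<omega>) (snd \<omega>) s)) else 0)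
    \<in> borel_measurable outcome_space"
proof -
  have "(\<lambda>\<omega>. (\<lambda>a \<omega>. if running A s (fst \<omega>) (snd \<omega>) then phi a (snd (obsf A (fst \<omega>) (snd \<omega>) s)) else 0)
      (arm_at A (fst \<omega>) (snd \<omega>) s) \<omega>) \<in> borel_measurable outcome_space"
    by (rule measurable_compose_countable[OF _ measurable_arm]) measurable
  then show ?thesis by simp
qed

context bandit_env
begin

definition expected_pulls :: "'k \<Rightarrow> ennreal" where
  "expected_pulls a = (\<integral>\<^sup>+\<omega>. (\<Sum>s. if running A s (fst \<omega>) (snd \<omega>) \<and> arm_at A (fst \<omega>) (snd \<omega>) s = a
      then 1 else 0) \<partial>outcomes)"

theorem wald_identity:
  assumes phi [measurable]: "\<And>a. phi a \<in> borel_measurable (borel \<Otimes>\<^sub>M borel)"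
  shows "(\<integral>\<^sup>+\<omega>. (\<Sum>s. if running A s (fst \<omega>) (snd \<omega>)
      then phi (arm_at A (fst \<omega>) (snd \<omega>) s) (snd (obsf A (fst \<omega>) (snd \<omega>) s)) else 0) \<partial>outcomes)
    = (\<Sum>a\<in>UNIV. (\<integral>\<^sup>+x. phi a x \<partial>M a) * expected_pulls a)"
proof -
  define f where "f s \<omega> = (if running A s (fst \<omega>) (snd \<omega>)
    then phi (arm_at A (fst \<omega>) (snd \<omega>) s) (snd (obsf A (fst \<omega>) (snd \<omega>) s)) else 0)" for s \<omega>
  define ind where "ind s a \<omega> = (if running A s (fst \<omega>) (snd \<omega>) \<and> arm_at A (fst \<omega>) (snd \<omega>) s = a
    then 1 else (0::ennreal))" for s a \<omega>
  have f: "f s \<in> borel_measurable outcome_space" for s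
    unfolding f_def by (rule measurable_running_sample[OF phi])
  have ind: "ind s a \<in> borel_measurable outcome_space" for s a
    unfolding ind_def by measurable
  have step: "(\<integral>\<^sup>+\<omega>. f s \<omega> \<partial>outcomes) = (\<Sum>a\<in>UNIV. (\<integral>\<^sup>+x. phi a x \<partial>M a) * (\<integral>\<^sup>+\<omega>. ind s a \<omega> \<partial>outcomes))" for s
  proof -
    have "(\<integral>\<^sup>+\<omega>. f s \<omega> \<partial>outcomes) = (\<integral>\<^sup>+u. (\<integral>\<^sup>+Z. f s (Z,u) \<partial>tables) \<partial>U)"
      by (rule nn_integral_outcomes[OF f])
    also have "\<dots> = (\<integral>\<^sup>+u. (\<Sum>a\<in>UNIV. (\<integral>\<^sup>+x. phi a x \<partial>M a) * (\<integral>\<^sup>+Z. ind s a (Z,u) \<partial>tables)) \<partial>U)"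
      using wald_identity_step[of phi, OF phi] unfolding f_def ind_def fst_conv snd_conv by simp
    also have "\<dots> = (\<Sum>a\<in>UNIV. (\<integral>\<^sup>+x. phi a x \<partial>M a) * (\<integral>\<^sup>+u. (\<integral>\<^sup>+Z. ind s a (Z,u) \<partial>tables) \<partial>U))"
      using measurable_nn_integral_section[OF ind] by (simp add: nn_integral_sum nn_integral_cmult)
    also have "\<dots> = (\<Sum>a\<in>UNIV. (\<integral>\<^sup>+x. phi a x \<partial>M a) * (\<integral>\<^sup>+\<omega>. ind s a \<omega> \<partial>outcomes))"
      by (simp add: nn_integral_outcomes[OF ind])
    finally show ?thesis .
  qed
  have "(\<integral>\<^sup>+\<omega>. (\<Sum>s. f s \<omega>) \<partial>outcomes) = (\<Sum>s. \<integral>\<^sup>+\<omega>. f s \<omega> \<partial>outcomes)"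
    using f by (intro nn_integral_suminf) (simp add: measurable_outcomes)
  also have "\<dots> = (\<Sum>a\<in>UNIV. \<Sum>s. (\<integral>\<^sup>+x. phi a x \<partial>M a) * (\<integral>\<^sup>+\<omega>. ind s a \<omega> \<partial>outcomes))"
    unfolding step by (rule suminf_sum) simp
  also have "\<dots> = (\<Sum>a\<in>UNIV. (\<integral>\<^sup>+x. phi a x \<partial>M a) * (\<integral>\<^sup>+\<omega>. (\<Sum>s. ind s a \<omega>) \<partial>outcomes))"
    using ind by (simp add: ennreal_suminf_cmult nn_integral_suminf measurable_outcomes)
  finally show ?thesis
    unfolding f_def ind_def expected_pulls_def .
qed

end

section \<open>Change of measure\<close>

definition lik_ratio :: "('k \<Rightarrow> real \<times> real \<Rightarrow> ennreal) \<Rightarrow> 'k obs list \<Rightarrow> ennreal" where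
  "lik_ratio rho h = prod_list (map (\<lambda>ob. rho (fst ob) (snd ob)) h)"

lemma lik_ratio_snoc: "lik_ratio rho (h @ [(a,x)]) = lik_ratio rho h * rho a x"
  by (simp add: lik_ratio_def)

lemma lik_ratio_hist:
  "lik_ratio rho (hist A Z u t) = (\<Prod>s<t. rho (fst (obsf A Z u s)) (snd (obsf A Z u s)))"
proof (induction t)
  case (Suc t)
  then show ?case
    unfolding hist_Suc_eq lik_ratio_def obsf_eq by simp
qed (simp add: lik_ratio_def)

lemma if_pulls_arm_at_hist_Suc:
  "(if pulls A Z u t a = n \<and> arm_at A Z u t = a then W (hist A Z u (Suc t)) else 0) =
   (if pulls A Z u t a = n then
      (if samp A t u (list_fun (hist A Z u t)) = a then W (hist A Z u t @ [(a, Z (a,n))]) else 0)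
    else (0::ennreal))"
  by (auto simp: hist_Suc_eq arm_at_def)

lemma sum_if_pulls_arm_at:
  fixes A :: "'k::finite alg" and f :: "'k obs list \<Rightarrow> 'b::comm_monoid_add"
  shows "f (hist A Z u (Suc t)) = (\<Sum>a\<in>UNIV. \<Sum>n\<in>{..t}.
    if pulls A Z u t a = n \<and> arm_at A Z u t = a then f (hist A Z u (Suc t)) else 0)"
proof -
  have "(\<Sum>n\<in>{..t}. if pulls A Z u t a = n \<and> arm_at A Z u t = a then f (hist A Z u (Suc t)) else 0)
      = (if arm_at A Z u t = a then f (hist A Z u (Suc t)) else 0)" for a
    using pulls_le[of A Z u t a] by (simp add: sum.delta)
  then show ?thesis by (simp add: sum.delta)
qed

lemma nn_integral_if_one:
  assumes "Measurable.pred M P"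
  shows "(\<integral>\<^sup>+x. (if P x then 1 else 0) \<partial>M) = emeasure M {x \<in> space M. P x}"
proof -
  have "(\<integral>\<^sup>+x. (if P x then 1 else 0) \<partial>M) = (\<integral>\<^sup>+x. indicator {x \<in> space M. P x} x \<partial>M)"
    by (rule nn_integral_cong) (auto simp: indicator_def)
  also have "\<dots> = emeasure M {x \<in> space M. P x}"
    using predE[OF assms] by (rule nn_integral_indicator)
  finally show ?thesis .
qed

locale change_of_measure = P: bandit_env A Mp U + Q: bandit_env A Mq U
  for A :: "'k::finite alg" and Mp Mq U +
  fixes rho :: "'k \<Rightarrow> real \<times> real \<Rightarrow> ennreal"
  assumes Mq_density: "\<And>a. Mq a = density (Mp a) (rho a)"
    and measurable_rho [measurable]: "\<And>a. rho a \<in> borel_measurable (borel \<Otimes>\<^sub>M borel)"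
begin

lemma sets_tables_eq: "sets Q.tables = sets P.tables"
  using P.sets_tables Q.sets_tables by simp

lemma measurable_lik_ratio [measurable]:
  "(\<lambda>\<omega>. lik_ratio rho (hist A (fst \<omega>) (snd \<omega>) t)) \<in> borel_measurable outcome_space"
proof -
  have "(\<lambda>ob. rho (fst ob) (snd ob)) \<in> borel_measurable (obs_space :: 'k obs measure)"
    unfolding obs_space_def
    by (rule measurable_compose_countable[where f="\<lambda>a ob. rho a (snd ob)" and g=fst]) auto
  from measurable_compose[OF P.measurable_obsf this]
  have [measurable]: "(\<lambda>\<omega>. rho (fst (obsf A (fst \<omega>) (snd \<omega>) s)) (snd (obsf A (fst \<omega>) (snd \<omega>) s)))
      \<in> borel_measurable outcome_space" for s .
  show ?thesis unfolding lik_ratio_hist by measurable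
qed

lemmas measurable_lik_ratio_section [measurable] =
  P.measurable_section[OF measurable_lik_ratio, simplified]

lemma nn_integral_entry_density:
  assumes "Z \<in> space P.tables" and "g \<in> borel_measurable P.tables"
  shows "(\<integral>\<^sup>+x. g (Z(p := x)) \<partial>Mq (fst p)) * c = (\<integral>\<^sup>+x. rho (fst p) x * g (Z(p := x)) * c \<partial>Mp (fst p))"
proof -
  have "(\<lambda>x. Z(p := x)) \<in> Mp (fst p) \<rightarrow>\<^sub>M P.tables"
    using assms(1) by (intro measurable_fun_upd[where J=UNIV]) auto
  then have "(\<lambda>x. g (Z(p := x))) \<in> borel_measurable (Mp (fst p))"
    using measurable_compose assms(2) by blast
  moreover have "rho (fst p) \<in> borel_measurable (Mp (fst p))"
    using measurable_rho measurable_cong_sets[OF P.sets_M refl] by blast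
  ultimately show ?thesis
    unfolding Mq_density by (simp add: nn_integral_density nn_integral_multc)
qed

text \<open>On the event that the entry \<open>(a, n)\<close> is read at time \<open>t\<close>, integrating that entry out first
  turns the density of \<open>Mq a\<close> into the last factor of the likelihood ratio.\<close>
lemma nn_integral_change_measure_step:
  assumes IH: "\<And>W. (\<lambda>Z. W (hist A Z u t)) \<in> borel_measurable P.tables \<Longrightarrow>
      (\<integral>\<^sup>+Z. W (hist A Z u t) \<partial>Q.tables) = (\<integral>\<^sup>+Z. W (hist A Z u t) * lik_ratio rho (hist A Z u t) \<partial>P.tables)"
    and [measurable]: "(\<lambda>Z. W (hist A Z u (Suc t))) \<in> borel_measurable P.tables"
  shows "(\<integral>\<^sup>+Z. (if pulls A Z u t a = n \<and> arm_at A Z u t = a then W (hist A Z u (Suc t)) else 0) \<partial>Q.tables)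
    = (\<integral>\<^sup>+Z. (if pulls A Z u t a = n \<and> arm_at A Z u t = a
        then W (hist A Z u (Suc t)) * lik_ratio rho (hist A Z u (Suc t)) else 0) \<partial>P.tables)"
    (is "(\<integral>\<^sup>+Z. ?G Z \<partial>Q.tables) = (\<integral>\<^sup>+Z. ?G' Z \<partial>P.tables)")
proof -
  define F where "F x h = (if samp A t u (list_fun h) = a then W (h @ [(a, x)]) else 0)" for x h
  have G [measurable]: "?G \<in> borel_measurable P.tables" "?G' \<in> borel_measurable P.tables"
    by measurable
  then have GQ: "?G \<in> borel_measurable Q.tables"
    using measurable_cong_sets[OF sets_tables_eq refl] by blast
  have G_upd: "?G (Z((a,n):=x)) = (if pulls A Z u t a = n then F x (hist A Z u t) else 0)" for Z x
    unfolding if_pulls_arm_at_hist_Suc F_def[symmetric] by (simp add: if_pulls_eq_fun_upd)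
  have G'_upd: "?G' (Z((a,n):=x)) = rho a x * ?G (Z((a,n):=x)) * lik_ratio rho (hist A Z u t)" for Z x
  proof -
    have "?G' (Z((a,n):=x)) = (if pulls A (Z((a,n):=x)) u t a = n
        then (\<lambda>h. F x h * lik_ratio rho h * rho a x) (hist A (Z((a,n):=x)) u t) else 0)"
      unfolding if_pulls_arm_at_hist_Suc[where W="\<lambda>h. W h * lik_ratio rho h"] F_def
      by (simp add: lik_ratio_snoc mult.assoc)
    also have "\<dots> = (if pulls A Z u t a = n then (\<lambda>h. F x h * lik_ratio rho h * rho a x) (hist A Z u t) else 0)"
      by (rule if_pulls_eq_fun_upd)
    finally show ?thesis by (simp add: G_upd mult_ac)
  qed
  define V where "V Z = (\<integral>\<^sup>+x. ?G (Z((a,n):=x)) \<partial>Mq a)" for Z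
  have V_hist: "V = (\<lambda>Z. if pulls A Z u t a = n then \<integral>\<^sup>+x. F x (hist A Z u t) \<partial>Mq a else 0)"
    unfolding V_def G_upd by (intro ext) simp
  have "V \<in> borel_measurable Q.tables"
    unfolding V_def using Q.measurable_nn_integral_entry[OF GQ, of "(a,n)"] by simp
  then have V: "V \<in> borel_measurable P.tables"
    using measurable_cong_sets[OF sets_tables_eq refl] by blast
  have "(\<integral>\<^sup>+Z. ?G Z \<partial>Q.tables) = (\<integral>\<^sup>+Z. V Z \<partial>Q.tables)"
    unfolding V_def
    using nn_integral_PiM_resample[of "\<lambda>p. Mq (fst p)" ?G "(a,n)"] Q.prob_space_M GQ by simp
  also have "\<dots> = (\<integral>\<^sup>+Z. V Z * lik_ratio rho (hist A Z u t) \<partial>P.tables)"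
    using IH[of "\<lambda>h. if length (filter (\<lambda>ob. fst ob = a) h) = n then \<integral>\<^sup>+x. F x h \<partial>Mq a else 0"] V
    unfolding V_hist pulls_def by simp
  also have "\<dots> = (\<integral>\<^sup>+Z. (\<integral>\<^sup>+x. ?G' (Z((a,n):=x)) \<partial>Mp a) \<partial>P.tables)"
  proof (rule nn_integral_cong)
    fix Z assume "Z \<in> space P.tables"
    from nn_integral_entry_density[OF this G(1), of "(a,n)" "lik_ratio rho (hist A Z u t)"]
    show "V Z * lik_ratio rho (hist A Z u t) = (\<integral>\<^sup>+x. ?G' (Z((a,n):=x)) \<partial>Mp a)"
      unfolding V_def G'_upd by simp
  qed
  also have "\<dots> = (\<integral>\<^sup>+Z. ?G' Z \<partial>P.tables)"
    using nn_integral_PiM_resample[of "\<lambda>p. Mp (fst p)" ?G' "(a,n)"] P.prob_space_M G(2) by simp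
  finally show ?thesis .
qed

theorem nn_integral_hist_change_measure:
  "(\<lambda>Z. W (hist A Z u t)) \<in> borel_measurable P.tables \<Longrightarrow>
   (\<integral>\<^sup>+Z. W (hist A Z u t) \<partial>Q.tables) = (\<integral>\<^sup>+Z. W (hist A Z u t) * lik_ratio rho (hist A Z u t) \<partial>P.tables)"
proof (induction t arbitrary: W)
  case 0
  then show ?case
    using P.prob_space_tables Q.prob_space_tables
    by (simp add: lik_ratio_def nn_integral_const prob_space.emeasure_space_1)
next
  case (Suc t W)
  note W [measurable] = Suc.prems
  have "(\<lambda>Z. W (hist A Z u (Suc t))) \<in> borel_measurable Q.tables"
    using W measurable_cong_sets[OF sets_tables_eq refl] by blast
  then have "(\<integral>\<^sup>+Z. W (hist A Z u (Suc t)) \<partial>Q.tables) = (\<Sum>a\<in>UNIV. \<Sum>n\<in>{..t}.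
      \<integral>\<^sup>+Z. (if pulls A Z u t a = n \<and> arm_at A Z u t = a then W (hist A Z u (Suc t)) else 0) \<partial>Q.tables)"
    by (subst sum_if_pulls_arm_at) (simp add: nn_integral_sum)
  also have "\<dots> = (\<Sum>a\<in>UNIV. \<Sum>n\<in>{..t}. \<integral>\<^sup>+Z. (if pulls A Z u t a = n \<and> arm_at A Z u t = a
      then W (hist A Z u (Suc t)) * lik_ratio rho (hist A Z u (Suc t)) else 0) \<partial>P.tables)"
    by (simp add: nn_integral_change_measure_step[OF Suc.IH W])
  also have "\<dots> = (\<integral>\<^sup>+Z. W (hist A Z u (Suc t)) * lik_ratio rho (hist A Z u (Suc t)) \<partial>P.tables)"
    by (subst (2) sum_if_pulls_arm_at) (simp add: nn_integral_sum)
  finally show ?case .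
qed

lemma stopped_event_change_measure_tables:
  "(\<integral>\<^sup>+Z. (if stops A Z u \<and> phi (decision A Z u) then lik_ratio rho (hist A Z u (tau A Z u)) else 0) \<partial>P.tables)
   = (\<integral>\<^sup>+Z. (if stops A Z u \<and> phi (decision A Z u) then 1 else 0) \<partial>Q.tables)"
proof -
  define D where "D t h \<longleftrightarrow> stp A t u (list_fun h) \<and> (\<forall>s<t. \<not> stp A s u (list_fun h))
    \<and> phi (dec A t u (list_fun h))" for t h
  have D_hist: "D t (hist A Z u t) \<longleftrightarrow> stops A Z u \<and> tau A Z u = t \<and> phi (decision A Z u)" for t Z
    using stopped_at_iff[OF P.valid, of t u Z] P.dec_obsf[of t u Z]
    unfolding D_def decision_def by auto
  have sum_D: "(if stops A Z u \<and> phi (decision A Z u) then X (hist A Z u (tau A Z u)) else 0)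
      = (\<Sum>t. if D t (hist A Z u t) then X (hist A Z u t) else (0::ennreal))" for X Z
    by (subst suminf_finite[of "{tau A Z u}"]) (auto simp: D_hist)
  have [measurable]: "Measurable.pred P.tables (\<lambda>Z. D t (hist A Z u t))" for t
    unfolding D_def by measurable
  then have DQ: "Measurable.pred Q.tables (\<lambda>Z. D t (hist A Z u t))" for t
    using measurable_cong_sets[OF sets_tables_eq refl] by blast
  have change: "(\<integral>\<^sup>+Z. (if D t (hist A Z u t) then lik_ratio rho (hist A Z u t) else 0) \<partial>P.tables)
      = (\<integral>\<^sup>+Z. (if D t (hist A Z u t) then 1 else 0) \<partial>Q.tables)" for t
  proof -
    have "(\<integral>\<^sup>+Z. (if D t (hist A Z u t) then 1 else 0) \<partial>Q.tables)
        = (\<integral>\<^sup>+Z. (if D t (hist A Z u t) then 1 else 0) * lik_ratio rho (hist A Z u t) \<partial>P.tables)"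
      by (rule nn_integral_hist_change_measure) measurable
    then show ?thesis by (simp add: if_distrib[of "\<lambda>x. x * _"] cong: if_cong)
  qed
  have "(\<integral>\<^sup>+Z. (if stops A Z u \<and> phi (decision A Z u) then lik_ratio rho (hist A Z u (tau A Z u)) else 0) \<partial>P.tables)
     = (\<Sum>t. \<integral>\<^sup>+Z. (if D t (hist A Z u t) then lik_ratio rho (hist A Z u t) else 0) \<partial>P.tables)"
    unfolding sum_D by (rule nn_integral_suminf) measurable
  also have "\<dots> = (\<Sum>t. \<integral>\<^sup>+Z. (if D t (hist A Z u t) then 1 else 0) \<partial>Q.tables)"
    by (simp only: change)
  also have "\<dots> = (\<integral>\<^sup>+Z. (if stops A Z u \<and> phi (decision A Z u) then 1 else 0) \<partial>Q.tables)"
    unfolding sum_D[where X="\<lambda>_. 1"] using DQ by (intro nn_integral_suminf[symmetric]) simp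
  finally show ?thesis .
qed

definition stopped_lik_ratio :: "('k \<Rightarrow> bool) \<Rightarrow> ('k \<times> nat \<Rightarrow> real \<times> real) \<times> real \<Rightarrow> ennreal" where
  "stopped_lik_ratio phi \<omega> = (if stops A (fst \<omega>) (snd \<omega>) \<and> phi (decision A (fst \<omega>) (snd \<omega>))
     then lik_ratio rho (hist A (fst \<omega>) (snd \<omega>) (tau A (fst \<omega>) (snd \<omega>))) else 0)"

lemma measurable_stopped_lik_ratio: "stopped_lik_ratio phi \<in> borel_measurable outcome_space"
proof -
  have "(\<lambda>\<omega>. (\<lambda>t \<omega>. if stops A (fst \<omega>) (snd \<omega>) \<and> phi (decision A (fst \<omega>) (snd \<omega>))
      then lik_ratio rho (hist A (fst \<omega>) (snd \<omega>) t) else 0) (tau A (fst \<omega>) (snd \<omega>)) \<omega>)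
    \<in> borel_measurable outcome_space"
    by (rule measurable_compose_countable[OF _ P.measurable_tau]) measurable
  then show ?thesis
    unfolding stopped_lik_ratio_def by simp
qed

theorem stopped_event_change_measure:
  "(\<integral>\<^sup>+\<omega>. stopped_lik_ratio phi \<omega> \<partial>P.outcomes)
   = emeasure Q.outcomes {\<omega> \<in> space Q.outcomes. stops A (fst \<omega>) (snd \<omega>) \<and> phi (decision A (fst \<omega>) (snd \<omega>))}"
proof -
  have event: "Measurable.pred outcome_space (\<lambda>\<omega>. stops A (fst \<omega>) (snd \<omega>) \<and> phi (decision A (fst \<omega>) (snd \<omega>)))"
    by measurable
  then have indicator: "(\<lambda>\<omega>. if stops A (fst \<omega>) (snd \<omega>) \<and> phi (decision A (fst \<omega>) (snd \<omega>))
      then 1 else (0::ennreal)) \<in> borel_measurable outcome_space"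
    by measurable
  have "(\<integral>\<^sup>+\<omega>. stopped_lik_ratio phi \<omega> \<partial>P.outcomes)
     = (\<integral>\<^sup>+\<omega>. (if stops A (fst \<omega>) (snd \<omega>) \<and> phi (decision A (fst \<omega>) (snd \<omega>)) then 1 else 0) \<partial>Q.outcomes)"
    unfolding P.nn_integral_outcomes[OF measurable_stopped_lik_ratio] Q.nn_integral_outcomes[OF indicator]
    unfolding stopped_lik_ratio_def fst_conv snd_conv
    using stopped_event_change_measure_tables by simp
  also have "\<dots> = emeasure Q.outcomes {\<omega> \<in> space Q.outcomes. stops A (fst \<omega>) (snd \<omega>) \<and> phi (decision A (fst \<omega>) (snd \<omega>))}"
    using Q.measurable_outcomes[OF event] by (rule nn_integral_if_one)
  finally show ?thesis .
qed

end

section \<open>Exponential families\<close>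

definition log_lik_ratio :: "(real \<Rightarrow> real) \<Rightarrow> (real \<Rightarrow> real) \<Rightarrow> real \<Rightarrow> real \<Rightarrow> real \<Rightarrow> real" where
  "log_lik_ratio theta b m m' x = (theta m - theta m') * x - (b (theta m) - b (theta m'))"

lemma measurable_log_lik_ratio [measurable]: "log_lik_ratio theta b m m' \<in> borel_measurable borel"
  unfolding log_lik_ratio_def by measurable

context
  fixes H theta b Theta
  assumes EF: "exp_family H theta b Theta"
begin

lemma sets_expfam_nu: "sets (expfam_nu H theta b m) = sets borel"
  using EF unfolding expfam_nu_def exp_family_def by simp

lemma prob_space_expfam_nu: "m \<in> {0..1} \<Longrightarrow> prob_space (expfam_nu H theta b m)"
  using EF unfolding exp_family_def by blast

lemma expfam_nu_density:
  "expfam_nu H theta b m' = density (expfam_nu H theta b m) (\<lambda>x. ennreal (exp (- log_lik_ratio theta b m m' x)))"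
proof -
  have "sets H = sets borel" using EF unfolding exp_family_def by blast
  then have H: "f \<in> borel_measurable borel \<Longrightarrow> f \<in> borel_measurable H" for f :: "real \<Rightarrow> real"
    using measurable_cong_sets[of H borel] by blast
  have "density (expfam_nu H theta b m) (\<lambda>x. ennreal (exp (- log_lik_ratio theta b m m' x)))
     = density H (\<lambda>x. ennreal (exp (theta m * x - b (theta m))) * ennreal (exp (- log_lik_ratio theta b m m' x)))"
    unfolding expfam_nu_def
    by (intro density_density_eq) (auto intro!: H simp: log_lik_ratio_def)
  also have "(\<lambda>x. ennreal (exp (theta m * x - b (theta m))) * ennreal (exp (- log_lik_ratio theta b m m' x)))
      = (\<lambda>x. ennreal (exp (theta m' * x - b (theta m'))))"
    by (auto simp: log_lik_ratio_def ennreal_mult[symmetric] exp_add[symmetric] algebra_simps)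
  finally show ?thesis unfolding expfam_nu_def by simp
qed

lemma integrable_log_lik_ratio:
  assumes "m \<in> {0..1}"
  shows "integrable (expfam_nu H theta b m) (log_lik_ratio theta b m m')"
proof -
  interpret prob_space "expfam_nu H theta b m"
    by (rule prob_space_expfam_nu[OF assms])
  have "integrable (expfam_nu H theta b m) (\<lambda>x. x)"
    using EF assms unfolding exp_family_def by blast
  then show ?thesis
    unfolding log_lik_ratio_def by (intro Bochner_Integration.integrable_diff integrable_mult_right) auto
qed

lemma kl_eq_integral_log_lik_ratio:
  assumes m: "m \<in> {0..1}" and m': "m' \<in> {0..1}"
  shows "kl (expfam_nu H theta b) m m' = (\<integral>x. log_lik_ratio theta b m m' x \<partial>expfam_nu H theta b m)"
proof -
  let ?N = "expfam_nu H theta b m" and ?M = "expfam_nu H theta b m'"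
  let ?f = "\<lambda>x. ennreal (exp (log_lik_ratio theta b m m' x))"
  have "- log_lik_ratio theta b m' m x = log_lik_ratio theta b m m' x" for x
    by (simp add: log_lik_ratio_def algebra_simps)
  then have dens: "?N = density ?M ?f"
    using expfam_nu_density[of m m'] by simp
  have "?f \<in> borel_measurable borel" by measurable
  then have f: "?f \<in> borel_measurable ?M"
    using measurable_cong_sets[OF sets_expfam_nu refl] by blast
  have "AE x in ?M. ?f x = RN_deriv ?M ?N x"
    using sigma_finite_measure.RN_deriv_unique[OF prob_space_imp_sigma_finite[OF prob_space_expfam_nu[OF m']]
        f dens[symmetric]] .
  then have "AE x in ?N. ?f x = RN_deriv ?M ?N x"
    using f by (subst dens) (simp add: AE_density)
  then have "AE x in ?N. log (exp 1) (enn2real (RN_deriv ?M ?N x)) = log_lik_ratio theta b m m' x"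
  proof eventually_elim
    case (elim x)
    show ?case unfolding elim[symmetric] by (simp add: log_def)
  qed
  moreover have "RN_deriv ?M ?N \<in> borel_measurable ?N"
    using borel_measurable_RN_deriv[of ?M ?N] measurable_cong_sets[of ?M ?N] sets_expfam_nu by metis
  moreover have "log_lik_ratio theta b m m' \<in> borel_measurable ?N"
    using measurable_cong_sets[OF sets_expfam_nu refl] measurable_log_lik_ratio by blast
  ultimately have "(\<integral>x. log (exp 1) (enn2real (RN_deriv ?M ?N x)) \<partial>?N) = (\<integral>x. log_lik_ratio theta b m m' x \<partial>?N)"
    by (intro integral_cong_AE) auto
  then show ?thesis
    by (simp add: kl_def KL_divergence_def entropy_density_def comp_def)
qed

end

text \<open>With \<open>X = \<Sum>x\<^sub>s\<close> split into positive part \<open>P\<close> and negative part \<open>N\<close>, this is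
  \<open>ln (k e\<^sup>-\<^sup>X) \<le> k e\<^sup>-\<^sup>X - 1\<close>.\<close>
lemma sum_neg_part_add_ln_le:
  fixes x :: "nat \<Rightarrow> real" and k :: real
  assumes k: "1 \<le> k"
  shows "(\<Sum>s<T. ennreal (- x s)) + ennreal (1 + ln k) \<le>
         (\<Sum>s<T. ennreal (x s)) + ennreal k * (\<Prod>s<T. ennreal (exp (- x s)))"
proof -
  define P where "P = (\<Sum>s<T. max (x s) 0)"
  define N where "N = (\<Sum>s<T. max (- x s) 0)"
  have PN: "P - N = (\<Sum>s<T. x s)"
    unfolding P_def N_def sum_subtractf[symmetric] by (intro sum.cong) auto
  have P0: "0 \<le> P" and N0: "0 \<le> N"
    unfolding P_def N_def by (auto intro: sum_nonneg)
  have "(\<Sum>s<T. ennreal (x s)) = ennreal P" and "(\<Sum>s<T. ennreal (- x s)) = ennreal N"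
    unfolding P_def N_def by (subst sum_ennreal[symmetric], auto intro!: sum.cong simp: ennreal_max_0)+
  moreover have "(\<Prod>s<T. ennreal (exp (- x s))) = ennreal (exp (- (P - N)))"
    unfolding PN by (simp add: prod_ennreal exp_sum[symmetric] sum_negf)
  moreover have "N + (1 + ln k) \<le> P + k * exp (- (P - N))"
    using ln_le_minus_one[of "k * exp (- (P - N))"] k by (simp add: ln_mult)
  ultimately show ?thesis
    using P0 N0 k by (simp add: ennreal_plus[symmetric] ennreal_mult[symmetric] del: ennreal_plus)
qed

text \<open>Choosing \<open>k = p\<^sub>A / \<delta>\<close> in the inequality above and using \<open>p ln p \<ge> p - 1\<close>.\<close>
lemma ln_inv_lower_bound_arith:
  fixes \<delta> pA pB xp xm :: real
  assumes \<delta>: "0 < \<delta>" "\<delta> < 1/2" and pB: "0 \<le> pB" "pB \<le> \<delta>" and sum: "pA + pB = 1"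
    and ineq: "xm + (1 + ln (pA / \<delta>)) * pA + pB \<le> xp + pA + 1"
  shows "(1 - \<delta>) * ln (1 / \<delta>) - 2 \<le> xp - xm"
proof -
  have pA: "1 - \<delta> \<le> pA" "0 < pA" using sum pB \<delta> by auto
  have "pA - 1 \<le> pA * ln pA"
  proof -
    have "ln (1 / pA) \<le> 1 / pA - 1" using pA by (intro ln_le_minus_one) simp
    then have "pA * (- ln pA) \<le> pA * (1 / pA - 1)" using pA by (intro mult_left_mono) (auto simp: ln_div)
    then show ?thesis using pA by (simp add: algebra_simps)
  qed
  moreover have "(1 - \<delta>) * ln (1 / \<delta>) \<le> pA * ln (1 / \<delta>)"
    using pA \<delta> by (intro mult_right_mono) auto
  moreover have "(1 + ln (pA / \<delta>)) * pA = pA + pA * ln pA + pA * ln (1 / \<delta>)"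
    using pA \<delta> by (simp add: ln_div algebra_simps)
  ultimately show ?thesis using ineq sum by linarith
qed

section \<open>Bandit instances\<close>

locale bandit_instance =
  fixes H :: "real measure" and theta b :: "real \<Rightarrow> real" and Theta :: "real set"
    and nuc :: "real \<Rightarrow> real measure" and l :: real
    and A :: "'k::finite alg" and mu c :: "'k \<Rightarrow> real"
  assumes EF: "exp_family H theta b Theta" and CF: "cost_family nuc l" and valid_A: "valid_alg A"
    and mu_range: "\<And>a. mu a \<in> {0..1}" and c_range: "\<And>a. c a \<in> {l..1}"
begin

abbreviation "nu \<equiv> expfam_nu H theta b"

abbreviation "U \<equiv> uniform_measure lborel {0..1::real}"

definition arm_law :: "'k \<Rightarrow> (real \<times> real) measure" where
  "arm_law a = nu (mu a) \<Otimes>\<^sub>M nuc (c a)"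

lemma prob_space_nuc: "prob_space (nuc (c a))"
  and sets_nuc: "sets (nuc (c a)) = sets borel"
  and nuc_mean: "(\<integral>\<^sup>+x. ennreal x \<partial>nuc (c a)) = ennreal (c a)"
proof -
  have l: "0 < l" using CF unfolding cost_family_def by simp
  have "prob_space (nuc (c a)) \<and> sets (nuc (c a)) = sets borel \<and> (AE x in nuc (c a). x \<in> {l..1})
      \<and> integrable (nuc (c a)) (\<lambda>x. x) \<and> (\<integral>x. x \<partial>nuc (c a)) = c a"
    using CF c_range[of a] unfolding cost_family_def by blast
  then have nuc: "prob_space (nuc (c a))" "sets (nuc (c a)) = sets borel"
      "AE x in nuc (c a). x \<in> {l..1}" "integrable (nuc (c a)) (\<lambda>x. x)" "(\<integral>x. x \<partial>nuc (c a)) = c a"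
    by auto
  show "prob_space (nuc (c a))" "sets (nuc (c a)) = sets borel" by (fact nuc)+
  have "AE x in nuc (c a). 0 \<le> x" using nuc(3) by eventually_elim (use l in auto)
  then show "(\<integral>\<^sup>+x. ennreal x \<partial>nuc (c a)) = ennreal (c a)"
    using nuc(4,5) by (simp add: nn_integral_eq_integral)
qed

lemma prob_space_arm_law: "prob_space (arm_law a)"
  unfolding arm_law_def using prob_space_expfam_nu[OF EF mu_range] prob_space_nuc
  by (rule prob_space_pair)

lemma sets_arm_law: "sets (arm_law a) = sets (borel \<Otimes>\<^sub>M borel)"
  unfolding arm_law_def by (rule sets_pair_measure_cong[OF sets_expfam_nu[OF EF] sets_nuc])

lemma prob_space_U: "prob_space U"
  by (rule prob_space_uniform_measure) auto

sublocale P: bandit_env A arm_law U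
  by (intro bandit_env.intro bandit_env_axioms.intro bandit_algorithm.intro valid_A prob_space_arm_law
      sets_arm_law prob_space_U) simp

lemma inst_measure_eq: "inst_measure nu nuc mu c = P.outcomes"
  unfolding inst_measure_def arm_law_def ..

lemma nn_integral_arm_law_fst:
  assumes "f \<in> borel_measurable borel"
  shows "(\<integral>\<^sup>+x. f (fst x) \<partial>arm_law a) = (\<integral>\<^sup>+r. f r \<partial>nu (mu a))"
proof -
  have "fst \<in> nu (mu a) \<Otimes>\<^sub>M nuc (c a) \<rightarrow>\<^sub>M borel"
    using measurable_fst measurable_cong_sets[OF refl sets_expfam_nu[OF EF]] by blast
  from measurable_compose[OF this assms]
  have "(\<lambda>x. f (fst x)) \<in> borel_measurable (nu (mu a) \<Otimes>\<^sub>M nuc (c a))" .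
  from sigma_finite_measure.nn_integral_fst[OF prob_space_imp_sigma_finite[OF prob_space_nuc] this]
  show ?thesis
    unfolding arm_law_def using prob_space.emeasure_space_1[OF prob_space_nuc]
    by (simp add: nn_integral_const)
qed

lemma nn_integral_arm_law_snd:
  assumes "g \<in> borel_measurable borel"
  shows "(\<integral>\<^sup>+x. g (snd x) \<partial>arm_law a) = (\<integral>\<^sup>+r. g r \<partial>nuc (c a))"
proof -
  have "snd \<in> nu (mu a) \<Otimes>\<^sub>M nuc (c a) \<rightarrow>\<^sub>M borel"
    using measurable_snd measurable_cong_sets[OF refl sets_nuc] by blast
  from measurable_compose[OF this assms]
  have "(\<lambda>x. g (snd x)) \<in> borel_measurable (nu (mu a) \<Otimes>\<^sub>M nuc (c a))" .
  moreover have "pair_sigma_finite (nu (mu a)) (nuc (c a))"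
    by (intro pair_sigma_finite.intro prob_space_imp_sigma_finite prob_space_expfam_nu[OF EF mu_range]
        prob_space_nuc)
  ultimately have "(\<integral>\<^sup>+y. (\<integral>\<^sup>+x. g (snd (x, y)) \<partial>nu (mu a)) \<partial>nuc (c a)) = (\<integral>\<^sup>+x. g (snd x) \<partial>arm_law a)"
    unfolding arm_law_def using pair_sigma_finite.nn_integral_snd by blast
  then show ?thesis
    using prob_space.emeasure_space_1[OF prob_space_expfam_nu[OF EF mu_range]]
    by (simp add: nn_integral_const)
qed

theorem expected_cost_eq_sum_pulls:
  assumes "AE \<omega> in P.outcomes. stops A (fst \<omega>) (snd \<omega>)"
  shows "(\<integral>\<^sup>+\<omega>. Jcost A (fst \<omega>) (snd \<omega>) \<partial>P.outcomes) = (\<Sum>a\<in>UNIV. ennreal (c a) * P.expected_pulls a)"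
proof -
  have "(\<integral>\<^sup>+\<omega>. Jcost A (fst \<omega>) (snd \<omega>) \<partial>P.outcomes)
      = (\<integral>\<^sup>+\<omega>. (\<Sum>s. if running A s (fst \<omega>) (snd \<omega>)
          then (\<lambda>a x. ennreal (snd x)) (arm_at A (fst \<omega>) (snd \<omega>) s) (snd (obsf A (fst \<omega>) (snd \<omega>) s)) else 0) \<partial>P.outcomes)"
    using assms
  proof (intro nn_integral_cong_AE, eventually_elim)
    case (elim \<omega>)
    obtain Z u where \<omega>: "\<omega> = (Z, u)" by (cases \<omega>)
    have "(\<Sum>s. if running A s Z u then ennreal (snd (snd (obsf A Z u s))) else 0)
        = (\<Sum>s<tau A Z u. ennreal (snd (snd (obsf A Z u s))))"
      using running_iff_less_tau[OF valid_A, of Z u] elim \<omega> by (subst suminf_finite[of "{..<tau A Z u}"]) auto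
    then show ?case
      using elim unfolding \<omega> fst_conv snd_conv by (simp add: Jcost_def)
  qed
  also have "\<dots> = (\<Sum>a\<in>UNIV. (\<integral>\<^sup>+x. ennreal (snd x) \<partial>arm_law a) * P.expected_pulls a)"
    by (rule P.wald_identity) simp
  also have "\<dots> = (\<Sum>a\<in>UNIV. ennreal (c a) * P.expected_pulls a)"
    by (simp add: nn_integral_arm_law_snd nuc_mean)
  finally show ?thesis .
qed

lemma c_pos: "0 < c a"
proof -
  have "0 < l" using CF unfolding cost_family_def by simp
  then show ?thesis using c_range[of a] by (meson atLeastAtMost_iff less_le_trans)
qed

definition decided :: "('k \<Rightarrow> bool) \<Rightarrow> (('k \<times> nat \<Rightarrow> real \<times> real) \<times> real) set" where
  "decided phi = {\<omega> \<in> space P.outcomes. stops A (fst \<omega>) (snd \<omega>) \<and> phi (decision A (fst \<omega>) (snd \<omega>))}"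

lemma sets_decided: "decided phi \<in> sets P.outcomes"
proof -
  have "Measurable.pred outcome_space (\<lambda>\<omega>. stops A (fst \<omega>) (snd \<omega>) \<and> phi (decision A (fst \<omega>) (snd \<omega>)))"
    by measurable
  then show ?thesis
    unfolding decided_def by (intro predE P.measurable_outcomes)
qed

lemma is_PAC_outcomes:
  assumes "is_PAC nu nuc l \<delta> A" and "unique_best mu"
  shows "AE \<omega> in P.outcomes. stops A (fst \<omega>) (snd \<omega>)"
    and "measure P.outcomes (decided (\<lambda>d. d \<noteq> best_arm mu)) \<le> \<delta>"
proof -
  have "measure (inst_measure nu nuc mu c) {\<omega> \<in> space (inst_measure nu nuc mu c).
      stops A (fst \<omega>) (snd \<omega>) \<and> decision A (fst \<omega>) (snd \<omega>) \<noteq> best_arm mu} \<le> \<delta>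
    \<and> (AE \<omega> in inst_measure nu nuc mu c. stops A (fst \<omega>) (snd \<omega>))"
    using assms(1)[unfolded is_PAC_def, rule_format, of mu c] mu_range c_range assms(2) by simp
  then show "AE \<omega> in P.outcomes. stops A (fst \<omega>) (snd \<omega>)"
    and "measure P.outcomes (decided (\<lambda>d. d \<noteq> best_arm mu)) \<le> \<delta>"
    unfolding inst_measure_eq decided_def by auto
qed

end

lemma (in prob_space) prob_split_AE:
  assumes "AE x in M. S x" and [measurable]: "Measurable.pred M S" "Measurable.pred M P"
  shows "prob {x \<in> space M. S x \<and> P x} + prob {x \<in> space M. S x \<and> \<not> P x} = 1"
proof -
  have "prob {x \<in> space M. S x \<and> P x} + prob {x \<in> space M. S x \<and> \<not> P x}
      = prob ({x \<in> space M. S x \<and> P x} \<union> {x \<in> space M. S x \<and> \<not> P x})"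
    by (rule finite_measure_Union[symmetric]) auto
  also have "{x \<in> space M. S x \<and> P x} \<union> {x \<in> space M. S x \<and> \<not> P x} = {x \<in> space M. S x}"
    by auto
  also have "prob {x \<in> space M. S x} = 1"
    using assms by (simp add: prob_Collect_eq_1)
  finally show ?thesis .
qed

locale alternative_instance = bandit_instance H theta b Theta nuc l A mu c
  for H theta b Theta nuc l and A :: "'k::finite alg" and mu c +
  fixes lam :: "'k \<Rightarrow> real"
  assumes lam_range: "\<And>a. lam a \<in> {0..1}"
begin

definition llr :: "'k \<Rightarrow> real \<Rightarrow> real" where
  "llr a = log_lik_ratio theta b (mu a) (lam a)"

definition rho :: "'k \<Rightarrow> real \<times> real \<Rightarrow> ennreal" where
  "rho a x = ennreal (exp (- llr a (fst x)))"

definition alt_law :: "'k \<Rightarrow> (real \<times> real) measure" where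
  "alt_law a = nu (lam a) \<Otimes>\<^sub>M nuc (c a)"

text \<open>Since \<open>ennreal\<close> truncates at \<open>0\<close>, this sums the positive parts (\<open>\<sigma> = 1\<close>) or the negative parts
  (\<open>\<sigma> = -1\<close>) of the log-likelihood ratios of the rewards observed before stopping.\<close>
definition llr_sum :: "real \<Rightarrow> ('k \<times> nat \<Rightarrow> real \<times> real) \<times> real \<Rightarrow> ennreal" where
  "llr_sum \<sigma> \<omega> = (\<Sum>s. if running A s (fst \<omega>) (snd \<omega>)
     then ennreal (\<sigma> * llr (arm_at A (fst \<omega>) (snd \<omega>) s) (fst (snd (obsf A (fst \<omega>) (snd \<omega>) s)))) else 0)"

lemma measurable_llr [measurable]: "llr a \<in> borel_measurable borel"
  unfolding llr_def by measurable

lemma measurable_rho: "rho a \<in> borel_measurable (borel \<Otimes>\<^sub>M borel)"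
  unfolding rho_def by measurable

lemma alt_law_density: "alt_law a = density (arm_law a) (rho a)"
proof -
  have "(\<lambda>x. ennreal (exp (- llr a x))) \<in> borel_measurable borel"
    by measurable
  then have "(\<lambda>x. ennreal (exp (- llr a x))) \<in> borel_measurable (nu (mu a))"
    using measurable_cong_sets[OF sets_expfam_nu[OF EF] refl] by blast
  then have "density (nu (mu a)) (\<lambda>x. ennreal (exp (- llr a x))) \<Otimes>\<^sub>M density (nuc (c a)) (\<lambda>_. 1)
      = density (arm_law a) (\<lambda>(x,y). ennreal (exp (- llr a x)) * 1)"
    unfolding arm_law_def
    by (rule pair_measure_density) (auto simp: density_1 prob_space_imp_sigma_finite[OF prob_space_nuc])
  moreover have "alt_law a = density (nu (mu a)) (\<lambda>x. ennreal (exp (- llr a x))) \<Otimes>\<^sub>M density (nuc (c a)) (\<lambda>_. 1)"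
    unfolding alt_law_def llr_def using expfam_nu_density[OF EF, of "lam a" "mu a"] by (simp add: density_1)
  moreover have "(\<lambda>(x,y). ennreal (exp (- llr a x)) * 1) = rho a"
    by (auto simp: rho_def fun_eq_iff)
  ultimately show ?thesis by simp
qed

sublocale Q: bandit_env A alt_law U
  unfolding alt_law_def
  by (intro bandit_env.intro bandit_env_axioms.intro bandit_algorithm.intro valid_A prob_space_pair
      prob_space_expfam_nu[OF EF lam_range] prob_space_nuc prob_space_U sets_pair_measure_cong
      sets_expfam_nu[OF EF] sets_nuc) simp

sublocale C: change_of_measure A arm_law alt_law U rho
  by (intro change_of_measure.intro change_of_measure_axioms.intro P.bandit_env_axioms Q.bandit_env_axioms
      bandit_algorithm.intro valid_A alt_law_density measurable_rho)

lemma inst_measure_alt_eq: "inst_measure nu nuc lam c = Q.outcomes"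
  unfolding inst_measure_def alt_law_def ..

lemma llr_sum_stopped:
  assumes "stops A Z u"
  shows "llr_sum \<sigma> (Z, u) = (\<Sum>s<tau A Z u. ennreal (\<sigma> * llr (fst (obsf A Z u s)) (fst (snd (obsf A Z u s)))))"
  unfolding llr_sum_def fst_conv snd_conv
  using running_iff_less_tau[OF valid_A assms] by (subst suminf_finite[of "{..<tau A Z u}"]) (auto simp: obsf_eq)

lemma lik_ratio_stopped:
  "lik_ratio rho (hist A Z u t) = (\<Prod>s<t. ennreal (exp (- llr (fst (obsf A Z u s)) (fst (snd (obsf A Z u s))))))"
  unfolding lik_ratio_hist rho_def ..

lemma llr_sum_bound:
  assumes "stops A Z u" and "1 \<le> k"
  shows "llr_sum (-1) (Z, u) + ennreal (1 + ln k) \<le> llr_sum 1 (Z, u) + ennreal k * lik_ratio rho (hist A Z u (tau A Z u))"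
  unfolding llr_sum_stopped[OF assms(1)] lik_ratio_stopped
  using sum_neg_part_add_ln_le[OF assms(2)] by simp

lemma integrable_llr: "integrable (nu (mu a)) (llr a)"
  unfolding llr_def by (rule integrable_log_lik_ratio[OF EF mu_range])

lemma nn_integral_llr_finite: "(\<integral>\<^sup>+r. ennreal (\<sigma> * llr a r) \<partial>nu (mu a)) \<noteq> \<infinity>"
  using integrableD(2)[OF integrable_mult_right[where c=\<sigma>, OF integrable_llr]] by simp

lemma kl_eq_llr_parts:
  "kl nu (mu a) (lam a) = enn2real (\<integral>\<^sup>+r. ennreal (llr a r) \<partial>nu (mu a)) - enn2real (\<integral>\<^sup>+r. ennreal (- llr a r) \<partial>nu (mu a))"
  using real_lebesgue_integral_def[OF integrable_llr] kl_eq_integral_log_lik_ratio[OF EF mu_range lam_range]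
  unfolding llr_def by simp

definition llr_mean :: "real \<Rightarrow> real" where
  "llr_mean \<sigma> = (\<Sum>a\<in>UNIV. enn2real (\<integral>\<^sup>+r. ennreal (\<sigma> * llr a r) \<partial>nu (mu a)) * enn2real (P.expected_pulls a))"

lemma llr_mean_nonneg: "0 \<le> llr_mean \<sigma>"
  unfolding llr_mean_def by (intro sum_nonneg) simp

lemma llr_mean_diff: "llr_mean 1 - llr_mean (-1) = (\<Sum>a\<in>UNIV. enn2real (P.expected_pulls a) * kl nu (mu a) (lam a))"
  unfolding llr_mean_def kl_eq_llr_parts sum_subtractf[symmetric] by (simp add: algebra_simps)

lemma expected_llr_sum:
  assumes "\<And>a. P.expected_pulls a \<noteq> \<infinity>"
  shows "(\<integral>\<^sup>+\<omega>. llr_sum \<sigma> \<omega> \<partial>P.outcomes) = ennreal (llr_mean \<sigma>)"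
proof -
  have "(\<integral>\<^sup>+x. ennreal (\<sigma> * llr a (fst x)) \<partial>arm_law a) = (\<integral>\<^sup>+r. ennreal (\<sigma> * llr a r) \<partial>nu (mu a))" for a
    by (rule nn_integral_arm_law_fst) measurable
  then have "(\<integral>\<^sup>+\<omega>. llr_sum \<sigma> \<omega> \<partial>P.outcomes) = (\<Sum>a\<in>UNIV. (\<integral>\<^sup>+r. ennreal (\<sigma> * llr a r) \<partial>nu (mu a)) * P.expected_pulls a)"
    unfolding llr_sum_def
    using P.wald_identity[of "\<lambda>a x. ennreal (\<sigma> * llr a (fst x))"] by simp
  also have "\<dots> = (\<Sum>a\<in>UNIV. ennreal (enn2real (\<integral>\<^sup>+r. ennreal (\<sigma> * llr a r) \<partial>nu (mu a)) * enn2real (P.expected_pulls a)))"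
    using nn_integral_llr_finite assms
    by (intro sum.cong refl) (auto simp: ennreal_mult ennreal_enn2real_if)
  also have "\<dots> = ennreal (llr_mean \<sigma>)"
    unfolding llr_mean_def by (intro sum_ennreal) auto
  finally show ?thesis .
qed

lemma measurable_llr_sum [measurable]: "llr_sum \<sigma> \<in> borel_measurable P.outcomes"
proof -
  have "(\<lambda>\<omega>. if running A s (fst \<omega>) (snd \<omega>)
      then ennreal (\<sigma> * llr (arm_at A (fst \<omega>) (snd \<omega>) s) (fst (snd (obsf A (fst \<omega>) (snd \<omega>) s)))) else 0)
    \<in> borel_measurable outcome_space" for s
    using P.measurable_running_sample[of "\<lambda>a x. ennreal (\<sigma> * llr a (fst x))" s] by simp
  then show ?thesis
    unfolding llr_sum_def by (intro P.measurable_outcomes borel_measurable_suminf_order)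
qed

lemma measurable_stopped_lik_ratio [measurable]: "C.stopped_lik_ratio phi \<in> borel_measurable P.outcomes"
  by (rule P.measurable_outcomes[OF C.measurable_stopped_lik_ratio])

lemma is_PAC_alternative:
  assumes "is_PAC nu nuc l \<delta> A" and "unique_best lam"
  shows "measure Q.outcomes {\<omega> \<in> space Q.outcomes.
    stops A (fst \<omega>) (snd \<omega>) \<and> decision A (fst \<omega>) (snd \<omega>) \<noteq> best_arm lam} \<le> \<delta>"
  using assms(1)[unfolded is_PAC_def, rule_format, of lam c] lam_range c_range assms(2)
  by (simp add: inst_measure_alt_eq)

text \<open>Under \<open>\<lambda>\<close>, returning the best arm of \<open>\<mu>\<close> is an error.\<close>
lemma nn_integral_stopped_lik_ratio_correct:
  assumes "is_PAC nu nuc l \<delta> A" and "unique_best lam" and "best_arm lam \<noteq> best_arm mu"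
  shows "(\<integral>\<^sup>+\<omega>. C.stopped_lik_ratio (\<lambda>d. d = best_arm mu) \<omega> \<partial>P.outcomes) \<le> ennreal \<delta>"
proof -
  interpret Q: prob_space Q.outcomes by (rule Q.prob_space_outcomes)
  have "(\<integral>\<^sup>+\<omega>. C.stopped_lik_ratio (\<lambda>d. d = best_arm mu) \<omega> \<partial>P.outcomes)
      = emeasure Q.outcomes {\<omega> \<in> space Q.outcomes. stops A (fst \<omega>) (snd \<omega>) \<and> decision A (fst \<omega>) (snd \<omega>) = best_arm mu}"
    by (rule C.stopped_event_change_measure)
  also have "\<dots> \<le> emeasure Q.outcomes {\<omega> \<in> space Q.outcomes.
      stops A (fst \<omega>) (snd \<omega>) \<and> decision A (fst \<omega>) (snd \<omega>) \<noteq> best_arm lam}"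
    using assms(3) by (intro emeasure_mono predE Q.measurable_outcomes) (auto, measurable)
  also have "\<dots> \<le> ennreal \<delta>"
    using is_PAC_alternative[OF assms(1,2)] by (simp add: Q.emeasure_eq_measure ennreal_leI)
  finally show ?thesis .
qed

lemma nn_integral_stopped_lik_ratio_le_1: "(\<integral>\<^sup>+\<omega>. C.stopped_lik_ratio phi \<omega> \<partial>P.outcomes) \<le> 1"
  unfolding C.stopped_event_change_measure
  using prob_space.emeasure_le_1[OF Q.prob_space_outcomes] .

lemma llr_sum_bound_AE:
  assumes stops: "AE \<omega> in P.outcomes. stops A (fst \<omega>) (snd \<omega>)" and k: "1 \<le> k"
  shows "AE \<omega> in P.outcomes.
    llr_sum (-1) \<omega> + ennreal (1 + ln k) * indicator (decided (\<lambda>d. d = best_arm mu)) \<omega>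
      + indicator (decided (\<lambda>d. d \<noteq> best_arm mu)) \<omega>
    \<le> llr_sum 1 \<omega> + ennreal k * C.stopped_lik_ratio (\<lambda>d. d = best_arm mu) \<omega>
      + C.stopped_lik_ratio (\<lambda>d. d \<noteq> best_arm mu) \<omega>"
  using stops AE_space
proof eventually_elim
  case (elim \<omega>)
  obtain Z u where \<omega>: "\<omega> = (Z, u)" by (cases \<omega>)
  show ?case
  proof (cases "decision A Z u = best_arm mu")
    case True
    then show ?thesis
      using llr_sum_bound[OF _ k, of Z u] elim
      unfolding \<omega> C.stopped_lik_ratio_def decided_def by (simp add: indicator_def)
  next
    case False
    then show ?thesis
      using llr_sum_bound[OF _ order_refl, of Z u] elim
      unfolding \<omega> C.stopped_lik_ratio_def decided_def by (simp add: indicator_def)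
  qed
qed

text \<open>Integrating the pointwise bound: by Wald's identity the clipped log-likelihood sums have means
  \<open>llr_mean (\<plusminus>1)\<close>; by the change of measure the likelihood ratio terms have mass at most \<open>\<delta>\<close> and \<open>1\<close>.\<close>
lemma llr_mean_bound:
  assumes PAC: "is_PAC nu nuc l \<delta> A" and best: "unique_best mu" "unique_best lam" "best_arm lam \<noteq> best_arm mu"
    and finite_pulls: "\<And>a. P.expected_pulls a \<noteq> \<infinity>" and k: "1 \<le> k" and \<delta>: "0 \<le> \<delta>"
  shows "llr_mean (-1) + (1 + ln k) * measure P.outcomes (decided (\<lambda>d. d = best_arm mu))
      + measure P.outcomes (decided (\<lambda>d. d \<noteq> best_arm mu)) \<le> llr_mean 1 + k * \<delta> + 1"
proof -
  interpret P: prob_space P.outcomes by (rule P.prob_space_outcomes)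
  note stops = is_PAC_outcomes(1)[OF PAC best(1)]
  have "ennreal (llr_mean (-1) + (1 + ln k) * P.prob (decided (\<lambda>d. d = best_arm mu))
      + P.prob (decided (\<lambda>d. d \<noteq> best_arm mu)))
    = ennreal (llr_mean (-1)) + ennreal (1 + ln k) * ennreal (P.prob (decided (\<lambda>d. d = best_arm mu)))
      + ennreal (P.prob (decided (\<lambda>d. d \<noteq> best_arm mu)))"
    using k llr_mean_nonneg by (simp add: ennreal_plus ennreal_mult)
  also have "\<dots> = (\<integral>\<^sup>+\<omega>. llr_sum (-1) \<omega> + ennreal (1 + ln k) * indicator (decided (\<lambda>d. d = best_arm mu)) \<omega>
        + indicator (decided (\<lambda>d. d \<noteq> best_arm mu)) \<omega> \<partial>P.outcomes)"
  proof -
    have m: "(\<lambda>\<omega>. ennreal (1 + ln k) * indicator (decided phi) \<omega>) \<in> borel_measurable P.outcomes"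
      "indicator (decided phi) \<in> borel_measurable P.outcomes" for phi
      using sets_decided by auto
    show ?thesis
      unfolding nn_integral_add[OF borel_measurable_add[OF measurable_llr_sum m(1)] m(2)]
        nn_integral_add[OF measurable_llr_sum m(1)] expected_llr_sum[OF finite_pulls]
        nn_integral_cmult_indicator[OF sets_decided] nn_integral_indicator[OF sets_decided]
      by (simp add: P.emeasure_eq_measure)
  qed
  also have "\<dots> \<le> (\<integral>\<^sup>+\<omega>. llr_sum 1 \<omega> + ennreal k * C.stopped_lik_ratio (\<lambda>d. d = best_arm mu) \<omega>
      + C.stopped_lik_ratio (\<lambda>d. d \<noteq> best_arm mu) \<omega> \<partial>P.outcomes)"
    by (rule nn_integral_mono_AE[OF llr_sum_bound_AE[OF stops k]])
  also have "\<dots> = ennreal (llr_mean 1) + ennreal k * (\<integral>\<^sup>+\<omega>. C.stopped_lik_ratio (\<lambda>d. d = best_arm mu) \<omega> \<partial>P.outcomes)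
      + (\<integral>\<^sup>+\<omega>. C.stopped_lik_ratio (\<lambda>d. d \<noteq> best_arm mu) \<omega> \<partial>P.outcomes)"
  proof -
    have m: "(\<lambda>\<omega>. ennreal k * C.stopped_lik_ratio phi \<omega>) \<in> borel_measurable P.outcomes" for phi
      by measurable
    show ?thesis
      unfolding nn_integral_add[OF borel_measurable_add[OF measurable_llr_sum m] measurable_stopped_lik_ratio]
        nn_integral_add[OF measurable_llr_sum m] expected_llr_sum[OF finite_pulls]
        nn_integral_cmult[OF measurable_stopped_lik_ratio] ..
  qed
  also have "\<dots> \<le> ennreal (llr_mean 1) + ennreal k * ennreal \<delta> + 1"
    using nn_integral_stopped_lik_ratio_correct[OF PAC best(2,3)] nn_integral_stopped_lik_ratio_le_1
    by (intro add_mono mult_left_mono) auto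
  also have "\<dots> = ennreal (llr_mean 1 + k * \<delta> + 1)"
    using k \<delta> llr_mean_nonneg by (simp add: ennreal_plus ennreal_mult)
  finally show ?thesis
    using k \<delta> llr_mean_nonneg by (subst (asm) ennreal_le_iff) auto
qed

theorem expected_pulls_kl_lower_bound:
  assumes PAC: "is_PAC nu nuc l \<delta> A" and best: "unique_best mu" "unique_best lam" "best_arm lam \<noteq> best_arm mu"
    and \<delta>: "0 < \<delta>" "\<delta> < 1/2" and finite_pulls: "\<And>a. P.expected_pulls a \<noteq> \<infinity>"
  shows "(1 - \<delta>) * ln (1 / \<delta>) - 2 \<le> (\<Sum>a\<in>UNIV. enn2real (P.expected_pulls a) * kl nu (mu a) (lam a))"
proof -
  interpret P: prob_space P.outcomes by (rule P.prob_space_outcomes)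
  define pA where "pA = P.prob (decided (\<lambda>d. d = best_arm mu))"
  define pB where "pB = P.prob (decided (\<lambda>d. d \<noteq> best_arm mu))"
  have "Measurable.pred P.outcomes (\<lambda>\<omega>. stops A (fst \<omega>) (snd \<omega>))"
    and "Measurable.pred P.outcomes (\<lambda>\<omega>. decision A (fst \<omega>) (snd \<omega>) = best_arm mu)"
    by (intro P.measurable_outcomes; measurable)+
  from P.prob_split_AE[OF is_PAC_outcomes(1)[OF PAC best(1)] this]
  have pAB: "pA + pB = 1"
    unfolding pA_def pB_def decided_def by simp
  have pB: "0 \<le> pB" "pB \<le> \<delta>"
    using is_PAC_outcomes(2)[OF PAC best(1)] unfolding pB_def by auto
  have "1 \<le> pA / \<delta>" and "pA / \<delta> * \<delta> = pA"
    using pAB pB \<delta> by (auto simp: field_simps)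
  then have "llr_mean (-1) + (1 + ln (pA / \<delta>)) * pA + pB \<le> llr_mean 1 + pA + 1"
    using llr_mean_bound[OF PAC best finite_pulls, of "pA / \<delta>"] \<delta> unfolding pA_def pB_def by simp
  then have "(1 - \<delta>) * ln (1 / \<delta>) - 2 \<le> llr_mean 1 - llr_mean (-1)"
    by (rule ln_inv_lower_bound_arith[OF \<delta> pB pAB])
  then show ?thesis
    unfolding llr_mean_diff .
qed

end

section \<open>The asymptotic lower bound\<close>

lemma prob_simplex_nonempty: "(prob_simplex :: ('k::finite \<Rightarrow> real) set) \<noteq> {}"
proof -
  have "(\<lambda>_. 1 / real CARD('k)) \<in> (prob_simplex :: ('k \<Rightarrow> real) set)"
    by (simp add: prob_simplex_def)
  then show ?thesis by blast
qed

text \<open>Normalising the expected costs \<open>c\<^sub>a n\<^sub>a\<close> of the arms gives a point of the simplex.\<close>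
lemma le_SUP_INF_prob_simplex:
  fixes n c :: "'k::finite \<Rightarrow> real" and D :: "'l \<Rightarrow> 'k \<Rightarrow> real"
  assumes n: "\<And>a. 0 \<le> n a" and c: "\<And>a. 0 < c a" and S: "0 < (\<Sum>a\<in>UNIV. c a * n a)"
    and B: "\<And>lam. lam \<in> L \<Longrightarrow> B \<le> (\<Sum>a\<in>UNIV. n a * D lam a)"
  shows "ereal (B / (\<Sum>a\<in>UNIV. c a * n a)) \<le> (SUP w\<in>prob_simplex. INF lam\<in>L. ereal (\<Sum>a\<in>UNIV. w a / c a * D lam a))"
proof -
  define S where "S = (\<Sum>a\<in>UNIV. c a * n a)"
  define w where "w a = c a * n a / S" for a
  have "w \<in> prob_simplex"
    using n c S by (auto simp: prob_simplex_def w_def S_def sum_divide_distrib[symmetric] less_imp_le)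
  moreover have "ereal (B / S) \<le> ereal (\<Sum>a\<in>UNIV. w a / c a * D lam a)" if "lam \<in> L" for lam
  proof -
    have "(\<Sum>a\<in>UNIV. w a / c a * D lam a) = (\<Sum>a\<in>UNIV. n a * D lam a) / S"
      unfolding sum_divide_distrib w_def using c by (intro sum.cong refl) (simp add: field_simps less_imp_neq[symmetric])
    then show ?thesis
      using B[OF that] S by (simp add: S_def divide_right_mono)
  qed
  ultimately show ?thesis
    unfolding S_def[symmetric] by (intro SUP_upper2[of w] INF_greatest) auto
qed

lemma inverse_mult_le_of_divide_le:
  fixes B S :: real and V :: ereal
  assumes "0 < B" "0 < S" "ereal (B / S) \<le> V"
  shows "1 / V * ereal B \<le> ereal S"
proof (cases V)
  case (real v)
  then have "B \<le> S * v" and "0 < v"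
    using assms by (auto simp: pos_divide_le_eq mult.commute intro: less_le_trans[of 0 "B / S"])
  then show ?thesis
    using real by (simp add: divide_ereal_def pos_divide_le_eq field_simps)
qed (use assms in auto)

lemma Tstar_mult_le:
  fixes n c :: "'k::finite \<Rightarrow> real"
  assumes n: "\<And>a. 0 \<le> n a" and c: "\<And>a. 0 < c a" and B: "0 < B"
    and bound: "\<And>lam. lam \<in> Alt mu \<Longrightarrow> B \<le> (\<Sum>a\<in>UNIV. n a * kl nu (mu a) (lam a))"
  shows "Tstar nu mu c * ereal B \<le> ereal (\<Sum>a\<in>UNIV. c a * n a)"
proof -
  define S where "S = (\<Sum>a\<in>UNIV. c a * n a)"
  have "0 \<le> S"
    unfolding S_def using c n by (simp add: sum_nonneg less_imp_le)
  show ?thesis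
  proof (cases "Alt mu = {}")
    case True
    then show ?thesis
      unfolding Tstar_def S_def[symmetric] using \<open>0 \<le> S\<close> by (simp add: prob_simplex_nonempty top_ereal_def)
  next
    case False
    then obtain lam where "lam \<in> Alt mu" by blast
    have "0 < S"
    proof (rule ccontr)
      assume "\<not> 0 < S"
      then have "(\<Sum>a\<in>UNIV. c a * n a) = 0"
        using \<open>0 \<le> S\<close> unfolding S_def by simp
      then have "\<forall>a\<in>UNIV. c a * n a = 0"
        using c n by (subst (asm) sum_nonneg_eq_0_iff) (auto simp: less_imp_le)
      then have "n a = 0" for a
        using c by (metis UNIV_I less_irrefl mult_eq_0_iff)
      then show False
        using bound[OF \<open>lam \<in> Alt mu\<close>] B by simp
    qed
    then show ?thesis
      unfolding Tstar_def S_def[symmetric]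
      using le_SUP_INF_prob_simplex[where L="Alt mu" and D="\<lambda>lam a. kl nu (mu a) (lam a)", OF n c] bound B
      by (intro inverse_mult_le_of_divide_le) (auto simp: S_def)
  qed
qed

theorem (in bandit_instance) expected_cost_lower_bound:
  assumes PAC: "is_PAC nu nuc l \<delta> A" and best: "unique_best mu"
    and \<delta>: "0 < \<delta>" "\<delta> < 1/2" and B: "0 < (1 - \<delta>) * ln (1 / \<delta>) - 2"
  shows "Tstar nu mu c * ereal ((1 - \<delta>) * ln (1 / \<delta>) - 2) \<le> expected_cost nu nuc mu c A"
proof -
  have cost: "expected_cost nu nuc mu c A = enn2ereal (\<Sum>a\<in>UNIV. ennreal (c a) * P.expected_pulls a)"
    unfolding expected_cost_def inst_measure_eq expected_cost_eq_sum_pulls[OF is_PAC_outcomes(1)[OF PAC best]] ..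
  show ?thesis
  proof (cases "\<exists>a. P.expected_pulls a = \<infinity>")
    case True
    then obtain a where "P.expected_pulls a = \<infinity>" by blast
    then have infinite: "(\<Sum>a\<in>UNIV. ennreal (c a) * P.expected_pulls a) = \<infinity>"
      using c_pos[of a] by (auto simp: ennreal_mult_eq_top_iff intro!: bexI[of _ a])
    show ?thesis
      unfolding cost infinite by simp
  next
    case False
    define n where "n a = enn2real (P.expected_pulls a)" for a
    have n: "0 \<le> n a" "P.expected_pulls a = ennreal (n a)" for a
      using False by (auto simp: n_def ennreal_enn2real_if)
    have "expected_cost nu nuc mu c A = ereal (\<Sum>a\<in>UNIV. c a * n a)"
      using c_pos n unfolding cost
      by (simp add: ennreal_mult[symmetric] less_imp_le sum_ennreal sum_nonneg)
    moreover have "(1 - \<delta>) * ln (1 / \<delta>) - 2 \<le> (\<Sum>a\<in>UNIV. n a * kl nu (mu a) (lam a))"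
      if "lam \<in> Alt mu" for lam
    proof -
      interpret alternative_instance H theta b Theta nuc l A mu c lam
        using that by (intro alternative_instance.intro bandit_instance_axioms alternative_instance_axioms.intro)
          (auto simp: Alt_def)
      show ?thesis
        using expected_pulls_kl_lower_bound[OF PAC best _ _ \<delta>] that False unfolding n_def Alt_def by auto
    qed
    ultimately show ?thesis
      using Tstar_mult_le[where n=n and c=c and nu=nu and mu=mu, OF n(1) c_pos B] by simp
  qed
qed

lemma ereal_mult_divide_le:
  fixes T E :: ereal
  assumes "T * ereal B \<le> E" and "0 < L"
  shows "T * ereal (B / L) \<le> E / ereal L"
proof -
  have "T * ereal B / ereal L \<le> E / ereal L"
    using assms by (intro ereal_divide_right_mono) auto
  moreover have "ereal (B / L) = ereal B / ereal L"
    using assms(2) by (simp add: ereal_divide)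
  ultimately show ?thesis
    by (simp only: ereal_times_divide_eq)
qed

lemma Liminf_ge_if_eventually_cmult_le:
  fixes f :: "'a \<Rightarrow> ereal" and g :: "'a \<Rightarrow> real"
  assumes "F \<noteq> bot" and "eventually (\<lambda>x. T * ereal (g x) \<le> f x) F" and "(g \<longlongrightarrow> 1) F"
  shows "T \<le> Liminf F f"
proof -
  have "((\<lambda>x. ereal (g x)) \<longlongrightarrow> 1) F"
    using assms(3) unfolding one_ereal_def by (rule tendsto_ereal)
  then have "Liminf F (\<lambda>x. T * ereal (g x)) = T"
    using assms(1) by (intro lim_imp_Liminf tendsto_cmult_ereal_not_0[where x=1, simplified]) auto
  moreover have "Liminf F (\<lambda>x. T * ereal (g x)) \<le> Liminf F f"
    using assms(2) by (rule Liminf_mono)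
  ultimately show ?thesis by simp
qed

theorem theorem1:
  fixes H :: "real measure" and theta b :: "real \<Rightarrow> real" and Theta :: "real set"
    and nuc :: "real \<Rightarrow> real measure" and l :: real
    and Alg :: "real \<Rightarrow> 'k::finite alg" and mu c :: "'k \<Rightarrow> real"
  assumes "exp_family H theta b Theta"
    and "cost_family nuc l"
    and "\<forall>delta\<in>{0<..<1}. valid_alg (Alg delta) \<and> is_PAC (expfam_nu H theta b) nuc l delta (Alg delta)"
    and "\<forall>a. mu a \<in> {0..1}" and "unique_best mu"
    and "\<forall>a. c a \<in> {l..1}"
  shows "Liminf (at_right 0) (\<lambda>delta.
            expected_cost (expfam_nu H theta b) nuc mu c (Alg delta) / ereal (ln (1 / delta)))
         \<ge> Tstar (expfam_nu H theta b) mu c"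
proof (rule Liminf_ge_if_eventually_cmult_le)
  define B where "B \<delta> = (1 - \<delta>) * ln (1 / \<delta>) - 2" for \<delta> :: real
  show "((\<lambda>\<delta>. B \<delta> / ln (1 / \<delta>)) \<longlongrightarrow> 1) (at_right 0)"
    unfolding B_def by real_asymp
  have "eventually (\<lambda>\<delta>. 0 < \<delta>) (at_right (0::real))" "eventually (\<lambda>\<delta>. \<delta> < 1/2) (at_right (0::real))"
    "eventually (\<lambda>\<delta>. 0 < B \<delta>) (at_right 0)"
    unfolding B_def by real_asymp+
  then show "eventually (\<lambda>\<delta>. Tstar (expfam_nu H theta b) mu c * ereal (B \<delta> / ln (1 / \<delta>))
      \<le> expected_cost (expfam_nu H theta b) nuc mu c (Alg \<delta>) / ereal (ln (1 / \<delta>))) (at_right 0)"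
  proof eventually_elim
    case (elim \<delta>)
    interpret bandit_instance H theta b Theta nuc l "Alg \<delta>" mu c
      using assms elim by unfold_locales auto
    show ?case
      using expected_cost_lower_bound[of \<delta>] assms(3,5) elim unfolding B_def
      by (intro ereal_mult_divide_le) auto
  qed
qed simp

end
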